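(* Let $\alpha,\beta,\gamma>-1$ and $|\delta|>1$. For all integers $0\le k\le n$ and $0\le\ell\le m$, $$\int_{\widetilde D_y}\int_{\widetilde D_x}\mathcal{J}_{n,k}(x,y)\,\mathcal{J}_{m,\ell}(x,y)\,\widetilde W(x,y)\,\mathrm{d}x\,\mathrm{d}y=\widetilde H_{nk}\,\delta_{k\ell}\,\delta_{nm},$$ where $$\widetilde W(x,y)=\theta(\delta xy)\,|y|^{\gamma+\beta}(1+y)\Big(1+\frac{x}{y}\Big)\Big(\frac{\delta-x}{y}\Big)(y^2-1)^{\frac{\alpha-1}{2}}\Big(\frac{x^2}{y^2}-1\Big)^{\frac{\gamma-1}{2}}\Big(\frac{\delta^2-x^2}{y^2}\Big)^{\frac{\beta-1}{2}},$$ $\theta$ is the sign function, $\widetilde D_x=[-|\delta|,-|y|]\cup[|y|,|\delta|]$ (for fixed $y$), $\widetilde D_y=[-|\delta|,-1]\cup[1,|\delta|]$, and $$\widetilde H_{nk}=(-1)^k\theta(\delta)\,\frac{(\delta^2-1)^{\frac{2k+\alpha+\beta+\gamma+3}{2}}}{1+(-1)^k\delta}\;\widetilde h_k(\gamma,\beta)\,\widetilde h_{n-k}(\alpha,2k+\beta+\gamma+1),$$ with $$\widetilde h_{n}(a,b)=\begin{cases}\dfrac{2\,\Gamma\big(\frac{n+b+1}{2}\big)\Gamma\big(\frac{n+a+3}{2}\big)\big(\frac n2\big)!}{(n+a+1)\,\Gamma\big(\frac{n+a+b+2}{2}\big)\big(\frac{a+1}{2}\big)_{n/2}^2}, & n\text{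 even},\\[3mm] \dfrac{(n+a+b+1)\,\Gamma\big(\frac{n+b+2}{2}\big)\Gamma\big(\frac{n+a+2}{2}\big)\big(\frac{n-1}{2}\big)!}{2\,\Gamma\big(\frac{n+a+b+3}{2}\big)\big(\frac{a+1}{2}\big)_{(n+1)/2}^2}, & n\text{ odd}.\end{cases}$$
   Context: For real $a,b$ and $c$ with $c^2\neq 1$, the (univariate) Big $-1$ Jacobi polynomials are $$J_{n}(x;a,b,c)=\begin{cases}{}_2F_1\!\left(\begin{smallmatrix}-\frac n2,\ \frac{n+a+b+2}{2}\\ \frac{a+1}{2}\end{smallmatrix};\frac{1-x^2}{1-c^2}\right)+\frac{n(1-x)}{(1+c)(a+1)}\,{}_2F_1\!\left(\begin{smallmatrix}1-\frac n2,\ \frac{n+a+b+2}{2}\\ \frac{a+3}{2}\end{smallmatrix};\frac{1-x^2}{1-c^2}\right), & n\text{ even},\\[2mm] {}_2F_1\!\left(\begin{smallmatrix}-\frac{n-1}2,\ \frac{n+a+b+1}{2}\\ \frac{a+1}{2}\end{smallmatrix};\frac{1-x^2}{1-c^2}\right)-\frac{(n+a+b+1)(1-x)}{(1+c)(a+1)}\,{}_2F_1\!\left(\begin{smallmatrix}-\frac{n-1}2,\ \frac{n+a+b+3}{2}\\ \frac{a+3}{2}\end{smallmatrix};\frac{1-x^2}{1-c^2}\right), & n\text{ odd},\end{cases}$$ where ${}_2F_1$ is the Gauss hypergeometric series (terminating here). Let $\rho_k(y)=y^k(1-\delta^2/y^2)^{k/2}$ if $k$ is even and $\rho_k(y)=y^k(1-\delta^2/y^2)^{(k-1)/2}(1+\delta/y)$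 if $k$ is odd. The two-variable Big $-1$ Jacobi polynomials are, for $k=0,1,2,\dots$ and $n=k,k+1,\dots$, $$\mathcal{J}_{n,k}(x,y)=J_{n-k}\big(y;\alpha,2k+\beta+\gamma+1,(-1)^k\delta\big)\,\rho_k(y)\,J_k\Big(\frac{x}{y};\gamma,\beta,\frac{\delta}{y}\Big),$$ a polynomial in $x,y$ (parameters $\alpha,\beta,\gamma$ real, $\delta\neq\pm1$). (The paper prints $\widetilde D_y=[-|\delta|,1]\cup[1,|\delta|]$; the intended set, used here, is $[-|\delta|,-1]\cup[1,|\delta|]$.) *)

theory Defs
  imports "HOL-Analysis.Analysis"
begin

text \<open>Gauss hypergeometric series 2F1(a,b;c;z) as the (formal) infinite series.
  In all uses below it terminates (or is multiplied by 0).\<close>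
definition hyp2F1 :: "real \<Rightarrow> real \<Rightarrow> real \<Rightarrow> real \<Rightarrow> real" where
  "hyp2F1 a b c z = (\<Sum>j. pochhammer a j * pochhammer b j / (pochhammer c j * fact j) * z ^ j)"

definition bigJ :: "nat \<Rightarrow> real \<Rightarrow> real \<Rightarrow> real \<Rightarrow> real \<Rightarrow> real" where
  "bigJ n x a b c =
    (let z = (1 - x\<^sup>2) / (1 - c\<^sup>2) in
     if even n then
       hyp2F1 (- real n / 2) ((real n + a + b + 2) / 2) ((a + 1) / 2) z
       + real n * (1 - x) / ((1 + c) * (a + 1))
         * hyp2F1 (1 - real n / 2) ((real n + a + b + 2) / 2) ((a + 3) / 2) z
     else
       hyp2F1 (- (real n - 1) / 2) ((real n + a + b + 1) / 2) ((a + 1) / 2) z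
       - (real n + a + b + 1) * (1 - x) / ((1 + c) * (a + 1))
         * hyp2F1 (- (real n - 1) / 2) ((real n + a + b + 3) / 2) ((a + 3) / 2) z)"

definition rho :: "real \<Rightarrow> nat \<Rightarrow> real \<Rightarrow> real" where
  "rho \<delta> k y =
    (if even k then y ^ k * (1 - \<delta>\<^sup>2 / y\<^sup>2) ^ (k div 2)
     else y ^ k * (1 - \<delta>\<^sup>2 / y\<^sup>2) ^ ((k - 1) div 2) * (1 + \<delta> / y))"

definition bigJ2 :: "real \<Rightarrow> real \<Rightarrow> real \<Rightarrow> real \<Rightarrow> nat \<Rightarrow> nat \<Rightarrow> real \<Rightarrow> real \<Rightarrow> real" where
  "bigJ2 \<alpha> \<beta> \<gamma> \<delta> n k x y =
     bigJ (n - k) y \<alpha> (2 * real k + \<beta> + \<gamma> + 1) ((-1) ^ k * \<delta>)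
     * rho \<delta> k y * bigJ k (x / y) \<gamma> \<beta> (\<delta> / y)"

definition weightW :: "real \<Rightarrow> real \<Rightarrow> real \<Rightarrow> real \<Rightarrow> real \<Rightarrow> real \<Rightarrow> real" where
  "weightW \<alpha> \<beta> \<gamma> \<delta> x y =
     sgn (\<delta> * x * y) * \<bar>y\<bar> powr (\<gamma> + \<beta>) * (1 + y) * (1 + x / y) * ((\<delta> - x) / y)
     * (y\<^sup>2 - 1) powr ((\<alpha> - 1) / 2)
     * (x\<^sup>2 / y\<^sup>2 - 1) powr ((\<gamma> - 1) / 2)
     * ((\<delta>\<^sup>2 - x\<^sup>2) / y\<^sup>2) powr ((\<beta> - 1) / 2)"

definition htilde :: "nat \<Rightarrow> real \<Rightarrow> real \<Rightarrow> real" where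
  "htilde n a b =
    (if even n then
       2 * Gamma ((real n + b + 1) / 2) * Gamma ((real n + a + 3) / 2) * fact (n div 2)
       / ((real n + a + 1) * Gamma ((real n + a + b + 2) / 2)
          * (pochhammer ((a + 1) / 2) (n div 2))\<^sup>2)
     else
       (real n + a + b + 1) * Gamma ((real n + b + 2) / 2) * Gamma ((real n + a + 2) / 2)
         * fact ((n - 1) div 2)
       / (2 * Gamma ((real n + a + b + 3) / 2) * (pochhammer ((a + 1) / 2) ((n + 1) div 2))\<^sup>2))"

definition Htilde :: "real \<Rightarrow> real \<Rightarrow> real \<Rightarrow> real \<Rightarrow> nat \<Rightarrow> nat \<Rightarrow> real" where
  "Htilde \<alpha> \<beta> \<gamma> \<delta> n k =
     (-1) ^ k * sgn \<delta>
     * (\<delta>\<^sup>2 - 1) powr ((2 * real k + \<alpha> + \<beta> + \<gamma> + 3) / 2) / (1 + (-1) ^ k * \<delta>)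
     * htilde k \<gamma> \<beta> * htilde (n - k) \<alpha> (2 * real k + \<beta> + \<gamma> + 1)"

definition Dx :: "real \<Rightarrow> real \<Rightarrow> real set" where
  "Dx \<delta> y = {- \<bar>\<delta>\<bar> .. - \<bar>y\<bar>} \<union> {\<bar>y\<bar> .. \<bar>\<delta>\<bar>}"

definition Dy :: "real \<Rightarrow> real set" where
  "Dy \<delta> = {- \<bar>\<delta>\<bar> .. -1} \<union> {1 .. \<bar>\<delta>\<bar>}"

end

theory Submission
  imports Defs "HOL-Computational_Algebra.Polynomial"
begin

text \<open>
  Substituting \<open>x = y t\<close> turns the inner integral into the orthogonality integral of the
  univariate polynomials \<open>J\<^sub>k(t; \<gamma>, \<beta>, \<delta>/y)\<close> for their own weight. What survives is \<open>\<delta>\<^sub>k\<^sub>l\<close> times a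
  norm which, multiplied by \<open>\<rho>\<^sub>k(y)\<^sup>2\<close> and the \<open>y\<close>-part of the weight, is exactly the
  univariate weight of the outer polynomials \<open>J\<^sub>n\<^sub>-\<^sub>k(y; \<alpha>, 2k + \<beta> + \<gamma> + 1, (-1)\<^sup>k \<delta>)\<close>;
  a second use of univariate orthogonality finishes the proof.

  Univariate orthogonality is proved by writing \<open>J\<^sub>n(x) = E(z) + x O(z)\<close> with
  \<open>z = (x\<^sup>2 - 1) / (c\<^sup>2 - 1)\<close>. Pairing \<open>x\<close> with \<open>-x\<close> folds the symmetric domain onto
  \<open>[1, \<bar>c\<bar>]\<close>, and the substitution \<open>x \<mapsto> z\<close> turns the integral into a Beta-type integral over
  \<open>[0, 1]\<close> of a polynomial in \<open>z\<close>. Contiguous relations of terminating \<open>\<^sub>2F\<^sub>1\<close> series express that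
  polynomial through Jacobi polynomials times polynomials of lower degree, so orthogonality and the
  norms reduce to the identity \<open>\<Sum>\<^sub>i (-1)\<^sup>i (N choose i) q(i) = 0\<close> for \<open>deg q < N\<close>.
\<close>

section \<open>Alternating binomial sums\<close>

lemma degree_diff_pcompose_shift_less:
  fixes p :: "'a::idom poly"
  assumes "degree p > 0"
  shows "degree (p - pcompose p [:1,1:]) < degree p"
proof -
  let ?q = "pcompose p [:1,1:]"
  have dq: "degree ?q = degree p" by (simp add: degree_pcompose)
  have lq: "lead_coeff ?q = lead_coeff p" by (simp add: lead_coeff_comp)
  have le: "degree (p - ?q) \<le> degree p" using degree_diff_le[of p "degree p" ?q] dq by simp
  have c0: "coeff (p - ?q) (degree p) = 0" using lq dq by simp
  show ?thesis
  proof (rule ccontr)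
    assume "\<not> ?thesis"
    then have e: "degree (p - ?q) = degree p" using le by simp
    then have "p - ?q \<noteq> 0" using assms by auto
    then have "coeff (p - ?q) (degree (p - ?q)) \<noteq> 0" by (rule leading_coeff_neq_0)
    with e c0 show False by simp
  qed
qed

lemma alternating_binomial_sum_Suc:
  fixes f :: "nat \<Rightarrow> 'a::comm_ring_1"
  shows "(\<Sum>i\<le>Suc N. (-1)^i * of_nat (Suc N choose i) * f i)
       = (\<Sum>i\<le>N. (-1)^i * of_nat (N choose i) * (f i - f (Suc i)))"
proof -
  have s1: "(\<Sum>i\<le>Suc N. (-1)^i * of_nat (Suc N choose i) * f i)
      = f 0 + (\<Sum>i\<le>N. (-1)^(Suc i) * of_nat (Suc N choose Suc i) * f (Suc i))"
    by (subst sum.atMost_Suc_shift) simp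
  have s2: "(\<Sum>i\<le>N. (-1)^(Suc i) * of_nat (Suc N choose Suc i) * f (Suc i))
     = (\<Sum>i\<le>N. (-1)^(Suc i) * of_nat (N choose i) * f (Suc i))
                 + (\<Sum>i\<le>N. (-1)^(Suc i) * of_nat (N choose Suc i) * f (Suc i))"
    unfolding sum.distrib[symmetric] by (intro sum.cong) (simp_all add: algebra_simps)
  have s3: "f 0 + (\<Sum>i\<le>N. (-1)^(Suc i) * of_nat (N choose Suc i) * f (Suc i))
      = (\<Sum>i\<le>Suc N. (-1)^i * of_nat (N choose i) * f i)"
    by (subst sum.atMost_Suc_shift) simp
  have s4: "(\<Sum>i\<le>Suc N. (-1)^i * of_nat (N choose i) * f i)
      = (\<Sum>i\<le>N. (-1)^i * of_nat (N choose i) * f i)"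
    by (simp add: binomial_eq_0)
  have s5: "(\<Sum>i\<le>N. (-1)^i * of_nat (N choose i) * (f i - f (Suc i)))
     = (\<Sum>i\<le>N. (-1)^i * of_nat (N choose i) * f i)
         + (\<Sum>i\<le>N. (-1)^(Suc i) * of_nat (N choose i) * f (Suc i))"
    unfolding sum.distrib[symmetric] by (intro sum.cong) (simp_all add: algebra_simps)
  show ?thesis using s1 s2 s3 s4 s5 by simp
qed

lemma alternating_binomial_sum_poly_eq_0:
  fixes p :: "'a::idom poly"
  assumes "degree p < N"
  shows "(\<Sum>i\<le>N. (-1)^i * of_nat (N choose i) * poly p (of_nat i)) = 0"
  using assms
proof (induction N arbitrary: p)
  case 0 then show ?case by simp
next
  case (Suc N)
  let ?q = "p - pcompose p [:1,1:]"
  have "(\<Sum>i\<le>Suc N. (-1)^i * of_nat (Suc N choose i) * poly p (of_nat i))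
       = (\<Sum>i\<le>N. (-1)^i * of_nat (N choose i) * poly ?q (of_nat i))"
    by (subst alternating_binomial_sum_Suc) (simp add: poly_pcompose algebra_simps)
  also have "\<dots> = 0"
  proof (cases "degree p = 0")
    case True
    then obtain c where "p = [:c:]" by (metis degree_eq_zeroE)
    then show ?thesis by (simp add: pcompose_pCons)
  next
    case False
    then have "degree ?q < degree p" by (intro degree_diff_pcompose_shift_less) simp
    with Suc show ?thesis by (intro Suc.IH) simp
  qed
  finally show ?case .
qed

lemma alternating_binomial_sum_inverse:
  fixes A :: real
  assumes "A > 0"
  shows "(\<Sum>i\<le>N. (-1)^i * real (N choose i) * (1 / (real i + A))) = fact N / pochhammer A (Suc N)"
  using assms
proof (induction N arbitrary: A)
  case 0 then show ?case by simp
next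
  case (Suc N)
  have "(\<Sum>i\<le>Suc N. (-1)^i * real (Suc N choose i) * (1 / (real i + A)))
     = (\<Sum>i\<le>N. (-1)^i * real (N choose i) * (1 / (real i + A) - 1 / (real (Suc i) + A)))"
    by (rule alternating_binomial_sum_Suc)
  also have "\<dots> = (\<Sum>i\<le>N. (-1)^i * real (N choose i) * (1 / (real i + A)))
                 - (\<Sum>i\<le>N. (-1)^i * real (N choose i) * (1 / (real i + (A + 1))))"
    by (simp add: sum_subtractf[symmetric] algebra_simps)
  also have "\<dots> = fact N / pochhammer A (Suc N) - fact N / pochhammer (A+1) (Suc N)"
    using Suc by simp
  also have "\<dots> = fact (Suc N) / pochhammer A (Suc (Suc N))"
  proof -
    have p1: "pochhammer A (Suc (Suc N)) = A * pochhammer (A+1) (Suc N)"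
      by (rule pochhammer_rec)
    have p2: "pochhammer A (Suc (Suc N)) = pochhammer A (Suc N) * (A + real (Suc N))"
      by (rule pochhammer_Suc)
    have n1: "pochhammer A (Suc N) > 0" "pochhammer (A+1) (Suc N) > 0"
      using Suc.prems by (auto intro: pochhammer_pos)
    have pp: "pochhammer A (Suc (Suc N)) > 0" using Suc.prems by (intro pochhammer_pos) simp
    have e1: "fact N / pochhammer A (Suc N)
        = fact N * (A + real (Suc N)) / pochhammer A (Suc (Suc N))"
      using n1 Suc.prems by (simp add: p2)
    have e2: "fact N / pochhammer (A+1) (Suc N) = fact N * A / pochhammer A (Suc (Suc N))"
      using n1 Suc.prems by (simp add: p1)
    show ?thesis unfolding e1 e2 using pp
      by (simp add: field_simps)
  qed
  finally show ?case .
qed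

section \<open>Terminating hypergeometric polynomials\<close>

lemma poly_pochhammer_linear:
  "poly (pochhammer [:x, 1:] j) y = pochhammer (x + y) (j::nat)"
  by (induction j) (simp_all add: pochhammer_Suc algebra_simps)

lemma degree_pochhammer_linear_le:
  "degree (pochhammer [:x::real, 1:] j) \<le> j"
proof (induction j)
  case 0 then show ?case by simp
next
  case (Suc j)
  have "degree (pochhammer [:x, 1:] j * ([:x,1:] + of_nat j))
      \<le> degree (pochhammer [:x, 1:] j) + degree ([:x,1:] + of_nat j :: real poly)"
    by (rule degree_mult_le)
  moreover have "degree ([:x,1:] + of_nat j :: real poly) \<le> 1"
    by (simp add: of_nat_poly)
  ultimately show ?case using Suc by (simp add: pochhammer_Suc)
qed

lemma alternating_binomial_sum_poly_div_linear:
  fixes Q :: "real poly" and A :: real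
  assumes Q: "degree Q \<le> N" and A: "A > 0"
  shows "(\<Sum>i\<le>N. (-1)^i * real (N choose i) * (poly Q (real i) / (real i + A)))
       = poly Q (- A) * fact N / pochhammer A (Suc N)"
proof -
  define R where "R = synthetic_div Q (- A)"
  have split: "poly Q (real i) / (real i + A) = poly R (real i) + poly Q (- A) * (1 / (real i + A))"
    for i
  proof -
    have "poly Q (real i) = (real i + A) * poly R (real i) + poly Q (- A)"
      using arg_cong[where f = "\<lambda>p. poly p (real i)", OF synthetic_div_correct'[of "- A" Q]]
      unfolding R_def by (simp add: algebra_simps)
    moreover have "real i + A > 0" using A by simp
    ultimately show ?thesis by (simp add: field_simps)
  qed
  have R0: "(\<Sum>i\<le>N. (-1)^i * real (N choose i) * poly R (real i)) = 0"
  proof (cases "N = 0")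
    case True
    then have "R = 0" using Q unfolding R_def by (simp add: synthetic_div_eq_0_iff)
    then show ?thesis by simp
  next
    case False
    then have "degree R < N" using Q unfolding R_def by (simp add: degree_synthetic_div)
    then show ?thesis by (rule alternating_binomial_sum_poly_eq_0)
  qed
  have "(\<Sum>i\<le>N. (-1)^i * real (N choose i) * (poly Q (real i) / (real i + A)))
      = (\<Sum>i\<le>N. (-1)^i * real (N choose i) * poly R (real i))
        + poly Q (- A) * (\<Sum>i\<le>N. (-1)^i * real (N choose i) * (1 / (real i + A)))"
    unfolding split distrib_left sum.distrib by (simp add: sum_distrib_left mult_ac)
  also have "\<dots> = poly Q (- A) * fact N / pochhammer A (Suc N)"
    unfolding R0 alternating_binomial_sum_inverse[OF A] by simp
  finally show ?thesis .
qed

lemma pochhammer_minus_of_nat_over_fact: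
  "pochhammer (- real N) i / fact i = (-1)^i * real (N choose i)"
proof -
  have "real (N choose i) = (real N gchoose i)" by (rule binomial_gbinomial)
  also have "\<dots> = (-1)^i * pochhammer (- real N) i / fact i" by (rule gbinomial_pochhammer)
  finally show ?thesis by simp
qed

lemma pochhammer_mult_shift_commute:
  fixes x :: "'a::comm_semiring_1"
  shows "pochhammer x i * pochhammer (x + of_nat i) j
      = pochhammer x j * pochhammer (x + of_nat j) i"
  using pochhammer_product'[of x i j] pochhammer_product'[of x j i] by (simp add: add.commute)

definition hyp_coeff :: "nat \<Rightarrow> real \<Rightarrow> real \<Rightarrow> nat \<Rightarrow> real" where
  "hyp_coeff N A B i = pochhammer (- real N) i * pochhammer A i / (pochhammer B i * fact i)"

definition hyp_poly :: "nat \<Rightarrow> real \<Rightarrow> real \<Rightarrow> real poly" where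
  "hyp_poly N A B = (\<Sum>i\<le>N. monom (hyp_coeff N A B i) i)"

lemma hyp_coeff_eq_0: "i > N \<Longrightarrow> hyp_coeff N A B i = 0"
  by (simp add: hyp_coeff_def pochhammer_of_nat_eq_0_lemma)

lemma coeff_hyp_poly: "coeff (hyp_poly N A B) i = hyp_coeff N A B i"
  by (cases "i \<le> N") (auto simp: hyp_poly_def coeff_sum coeff_monom hyp_coeff_eq_0)

lemma degree_hyp_poly: "degree (hyp_poly N A B) \<le> N"
  by (rule degree_le) (simp add: coeff_hyp_poly hyp_coeff_eq_0)

lemma hyp_coeff_0 [simp]: "hyp_coeff N A B 0 = 1"
  by (simp add: hyp_coeff_def)

lemma hyp_poly_0 [simp]: "hyp_poly 0 A B = 1"
  by (simp add: hyp_poly_def)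

lemma hyp_coeff_binomial:
  "hyp_coeff N A B i = (-1)^i * real (N choose i) * (pochhammer A i / pochhammer B i)"
  unfolding hyp_coeff_def using pochhammer_minus_of_nat_over_fact[of N i]
  by (simp add: field_simps)

lemma hyp_coeff_self: "hyp_coeff N A B N = (-1)^N * pochhammer A N / pochhammer B N"
  unfolding hyp_coeff_def by (simp add: pochhammer_same)

lemma hyp2F1_minus_of_nat:
  "hyp2F1 (- real N) A B z = poly (hyp_poly N A B) z"
proof -
  have "hyp2F1 (- real N) A B z
      = (\<Sum>j\<le>N. pochhammer (- real N) j * pochhammer A j / (pochhammer B j * fact j) * z ^ j)"
    unfolding hyp2F1_def
    by (rule suminf_finite) (auto simp: pochhammer_of_nat_eq_0_lemma)
  also have "\<dots> = poly (hyp_poly N A B) z"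
    unfolding hyp_poly_def hyp_coeff_def by (simp add: poly_sum poly_monom)
  finally show ?thesis .
qed

lemma pochhammer_minus_of_nat_Suc:
  "pochhammer (- real (Suc M)) (Suc k) = - (real M + 1) * pochhammer (- real M) k"
  by (subst pochhammer_rec) (simp add: algebra_simps)

lemma hyp_poly_contig_a_minus_1:
  assumes g: "g > 0"
  shows "hyp_poly N a g + smult (real N / g) (pCons 0 (hyp_poly (N - 1) a (g + 1)))
      = hyp_poly N (a - 1) g"
proof (rule poly_eqI)
  fix i
  show "coeff (hyp_poly N a g + smult (real N / g) (pCons 0 (hyp_poly (N - 1) a (g + 1)))) i
      = coeff (hyp_poly N (a - 1) g) i"
  proof (cases i)
    case 0 then show ?thesis by (simp add: coeff_hyp_poly)
  next
    case (Suc k)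
    show ?thesis
    proof (cases N)
      case 0 then show ?thesis using Suc by (simp add: coeff_hyp_poly hyp_coeff_def pochhammer_rec)
    next
      case (Suc M)
      have G: "pochhammer (g+1) k > 0" using g by (intro pochhammer_pos) simp
      have r1: "pochhammer g (Suc k) = g * pochhammer (g+1) k" by (rule pochhammer_rec)
      have r2: "pochhammer a (Suc k) = pochhammer a k * (a + real k)" by (rule pochhammer_Suc)
      have r3: "pochhammer (a - 1) (Suc k) = (a - 1) * pochhammer a k"
        by (subst pochhammer_rec) simp
      define kk where "kk = real k + 1"
      have kk: "kk \<noteq> 0" unfolding kk_def by simp
      have r4: "fact (Suc k) = kk * (fact k :: real)" unfolding kk_def by simp
      have "g \<noteq> 0" "pochhammer (g+1) k \<noteq> 0" "fact k \<noteq> (0::real)" using G g by auto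
      then show ?thesis
        unfolding \<open>i = Suc k\<close> \<open>N = Suc M\<close> diff_Suc_1 coeff_add coeff_smult coeff_hyp_poly
          coeff_pCons_Suc
        unfolding hyp_coeff_def pochhammer_minus_of_nat_Suc r1 r2 r3 r4
        using kk by (simp add: field_simps) (simp add: kk_def algebra_simps)
    qed
  qed
qed

lemma hyp_poly_contig_c_plus_1:
  assumes g: "g > 0"
  shows "hyp_poly N a g + smult (real N / g) (hyp_poly (N - 1) a (g + 1))
      = smult ((g + real N) / g) (hyp_poly N a (g + 1))"
proof (rule poly_eqI)
  fix i
  show "coeff (hyp_poly N a g + smult (real N / g) (hyp_poly (N - 1) a (g + 1))) i
      = coeff (smult ((g + real N) / g) (hyp_poly N a (g + 1))) i"
  proof (cases i)
    case 0 then show ?thesis using g by (simp add: coeff_hyp_poly field_simps)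
  next
    case (Suc k)
    show ?thesis
    proof (cases N)
      case 0 then show ?thesis using Suc by (simp add: coeff_hyp_poly hyp_coeff_def pochhammer_rec)
    next
      case (Suc M)
      have G: "pochhammer (g+1) k > 0" using g by (intro pochhammer_pos) simp
      have r1: "pochhammer g (Suc k) = g * pochhammer (g+1) k" by (rule pochhammer_rec)
      have r2: "pochhammer a (Suc k) = pochhammer a k * (a + real k)" by (rule pochhammer_Suc)
      have r3: "pochhammer (- real M) (Suc k) = pochhammer (- real M) k * (- real M + real k)"
        by (rule pochhammer_Suc)
      define kk where "kk = real k + 1"
      define gq where "gq = g + 1 + real k"
      have kk: "kk \<noteq> 0" "gq \<noteq> 0" unfolding kk_def gq_def using g by auto
      have r4: "fact (Suc k) = kk * (fact k :: real)" unfolding kk_def by simp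
      have r5: "pochhammer (g+1) (Suc k) = pochhammer (g+1) k * gq" unfolding gq_def
        by (rule pochhammer_Suc)
      have "g \<noteq> 0" "pochhammer (g+1) k \<noteq> 0" "fact k \<noteq> (0::real)" using G g by auto
      then show ?thesis
        unfolding \<open>i = Suc k\<close> \<open>N = Suc M\<close> diff_Suc_1 coeff_add coeff_smult coeff_hyp_poly
        unfolding hyp_coeff_def pochhammer_minus_of_nat_Suc r1 r2 r3 r4 r5
        using kk by (simp add: field_simps) (simp add: kk_def gq_def algebra_simps)
    qed
  qed
qed

lemma hyp_poly_contig_Suc:
  assumes g: "g > 0"
  shows "hyp_poly N a g - smult (a / g) (pCons 0 (hyp_poly N (a + 1) (g + 1)))
      = hyp_poly (Suc N) a g"
proof (rule poly_eqI)
  fix i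
  show "coeff (hyp_poly N a g - smult (a / g) (pCons 0 (hyp_poly N (a + 1) (g + 1)))) i
      = coeff (hyp_poly (Suc N) a g) i"
  proof (cases i)
    case 0 then show ?thesis by (simp add: coeff_hyp_poly)
  next
    case (Suc k)
    have G: "pochhammer (g+1) k > 0" using g by (intro pochhammer_pos) simp
    have r1: "pochhammer g (Suc k) = g * pochhammer (g+1) k" by (rule pochhammer_rec)
    have r2: "pochhammer a (Suc k) = a * pochhammer (a + 1) k" by (rule pochhammer_rec)
    have r3: "pochhammer (- real N) (Suc k) = pochhammer (- real N) k * (- real N + real k)"
      by (rule pochhammer_Suc)
    define kk where "kk = real k + 1"
    have kk: "kk \<noteq> 0" unfolding kk_def by simp
    have r4: "fact (Suc k) = kk * (fact k :: real)" unfolding kk_def by simp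
    have "g \<noteq> 0" "pochhammer (g+1) k \<noteq> 0" "fact k \<noteq> (0::real)" using G g by auto
    then show ?thesis
      unfolding \<open>i = Suc k\<close> coeff_diff coeff_smult coeff_hyp_poly coeff_pCons_Suc
      unfolding hyp_coeff_def pochhammer_minus_of_nat_Suc r1 r2 r3 r4
      using kk by (simp add: field_simps) (simp add: kk_def algebra_simps)
  qed
qed

lemma hyp_poly_contig_a_c_plus_1:
  assumes g: "g > 0"
  shows "hyp_poly N a g - smult (a / g) (hyp_poly N (a + 1) (g + 1))
      = smult ((g - a) / g) (hyp_poly N a (g + 1))"
proof (rule poly_eqI)
  fix i
  show "coeff (hyp_poly N a g - smult (a / g) (hyp_poly N (a + 1) (g + 1))) i
      = coeff (smult ((g - a) / g) (hyp_poly N a (g + 1))) i"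
  proof (cases i)
    case 0 then show ?thesis using g by (simp add: coeff_hyp_poly field_simps)
  next
    case (Suc k)
    have G: "pochhammer (g+1) k > 0" using g by (intro pochhammer_pos) simp
    have r1: "pochhammer g (Suc k) = g * pochhammer (g+1) k" by (rule pochhammer_rec)
    have r2: "pochhammer a (Suc k) = a * pochhammer (a + 1) k" by (rule pochhammer_rec)
    have r3: "pochhammer (a + 1) (Suc k) = pochhammer (a + 1) k * (a + 1 + real k)"
      by (rule pochhammer_Suc)
    define kk where "kk = real k + 1"
    define gq where "gq = g + 1 + real k"
    have kk: "kk \<noteq> 0" "gq \<noteq> 0" unfolding kk_def gq_def using g by auto
    have r4: "fact (Suc k) = kk * (fact k :: real)" unfolding kk_def by simp
    have r5: "pochhammer (g+1) (Suc k) = pochhammer (g+1) k * gq" unfolding gq_def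
      by (rule pochhammer_Suc)
    have "g \<noteq> 0" "pochhammer (g+1) k \<noteq> 0" "fact k \<noteq> (0::real)" using G g by auto
    then show ?thesis
      unfolding \<open>i = Suc k\<close> coeff_diff coeff_smult coeff_hyp_poly
      unfolding hyp_coeff_def r1 r2 r3 r4 r5
      using kk by (simp add: field_simps) (simp add: kk_def gq_def algebra_simps)
  qed
qed

section \<open>Beta moments and Jacobi polynomials\<close>

lemma Beta_plus_of_nat_left:
  fixes x y :: real
  assumes "x > 0" "y > 0"
  shows "Beta (x + real i) y = Beta x y * pochhammer x i / pochhammer (x + y) i"
proof (induction i)
  case 0 then show ?case by simp
next
  case (Suc i)
  have "x + real i > 0" using assms by simp
  then have nz: "x + real i \<notin> \<int>\<^sub>\<le>\<^sub>0" by (auto dest: nonpos_Ints_nonpos)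
  have "(x + real i + y) * Beta (x + real i + 1) y = (x + real i) * Beta (x + real i) y"
    by (rule Beta_plus1_left[OF nz])
  moreover have "pochhammer (x+y) i > 0" using assms by (intro pochhammer_pos) simp
  moreover have "x + real i + y > 0" using assms by simp
  ultimately have "Beta (x + real (Suc i)) y = (x + real i) * Beta (x+real i) y / (x+real i+y)"
    by (simp add: field_simps add_ac)
  also have "\<dots> = (x + real i) * (Beta x y * pochhammer x i / pochhammer (x + y) i) / (x+real i+y)"
    using Suc.IH by simp
  also have "\<dots> = Beta x y * pochhammer x (Suc i) / pochhammer (x + y) (Suc i)"
    by (simp add: pochhammer_Suc field_simps add_ac)
  finally show ?case .
qed

text \<open>\<open>beta_moment g s p\<close> is the integral of \<open>p z * z powr (g - 1) * (1 - z) powr (s - 1)\<close> over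
  \<open>{0..1}\<close> (\<open>has_integral_beta_moment\<close>); defining it through the Beta function keeps the
  algebra below free of integrals.\<close>

definition beta_moment :: "real \<Rightarrow> real \<Rightarrow> real poly \<Rightarrow> real" where
  "beta_moment g s p = (\<Sum>i\<le>degree p. coeff p i * Beta (g + real i) s)"

lemma beta_moment_degree_le:
  assumes "degree p \<le> K"
  shows "beta_moment g s p = (\<Sum>i\<le>K. coeff p i * Beta (g + real i) s)"
  unfolding beta_moment_def using assms
  by (intro sum.mono_neutral_left) (auto simp: coeff_eq_0)

lemma beta_moment_add: "beta_moment g s (p + q) = beta_moment g s p + beta_moment g s q"
proof -
  let ?K = "max (degree p) (degree q)"
  have "degree (p + q) \<le> ?K" by (rule degree_add_le) auto
  then show ?thesis
    by (simp add: beta_moment_degree_le[of "p+q" ?K] beta_moment_degree_le[of p ?K]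
      beta_moment_degree_le[of q ?K] sum.distrib algebra_simps)
qed

lemma beta_moment_smult: "beta_moment g s (smult c p) = c * beta_moment g s p"
  by (simp add: beta_moment_degree_le[of "smult c p" "degree p"]
    beta_moment_degree_le[of p "degree p"] sum_distrib_left mult_ac)

lemma beta_moment_diff: "beta_moment g s (p - q) = beta_moment g s p - beta_moment g s q"
  using beta_moment_add[of g s p "-q"] beta_moment_smult[of g s "-1" q] by simp

lemma beta_moment_0 [simp]: "beta_moment g s 0 = 0"
  by (simp add: beta_moment_def)

lemma beta_moment_sum: "finite I \<Longrightarrow> beta_moment g s (\<Sum>i\<in>I. f i) = (\<Sum>i\<in>I. beta_moment g s (f i))"
  by (induction I rule: finite_induct) (simp_all add: beta_moment_add)

lemma beta_moment_pCons_0: "beta_moment g s (pCons 0 p) = beta_moment (g + 1) s p"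
proof -
  have "degree (pCons 0 p) \<le> Suc (degree p)" by (simp add: degree_pCons_le)
  then have "beta_moment g s (pCons 0 p)
      = (\<Sum>i\<le>Suc (degree p). coeff (pCons 0 p) i * Beta (g + real i) s)"
    by (rule beta_moment_degree_le)
  also have "\<dots> = (\<Sum>i\<le>degree p. coeff p i * Beta (g + 1 + real i) s)"
    by (subst sum.atMost_Suc_shift) (simp add: add_ac)
  finally show ?thesis by (simp add: beta_moment_def)
qed

lemma beta_moment_monom_mult: "beta_moment g s (monom 1 j * p) = beta_moment (g + real j) s p"
proof (induction j arbitrary: g)
  case 0 then show ?case by simp
next
  case (Suc j)
  have "monom (1::real) (Suc j) * p = [:0,1:] * (monom 1 j * p)"
    by (simp add: monom_Suc)
  then show ?case using Suc[of "g+1"] by (simp add: beta_moment_pCons_0 add_ac)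
qed

lemma beta_moment_one_minus_x:
  assumes "g > 0" "s > 0"
  shows "beta_moment g s ([:1,-1:] * p) = beta_moment g (s + 1) p"
proof -
  have e: "[:1,-1:] * p = p - pCons 0 p" by simp
  have "beta_moment g s ([:1,-1:] * p) = beta_moment g s p - beta_moment (g+1) s p"
    unfolding beta_moment_diff[of g s p "pCons 0 p", symmetric] beta_moment_pCons_0[symmetric] e
    by (rule refl)
  also have "\<dots> = (\<Sum>i\<le>degree p. coeff p i * (Beta (g + real i) s - Beta (g + real i + 1) s))"
    by (simp add: beta_moment_def sum_subtractf algebra_simps add_ac)
  also have "\<dots> = beta_moment g (s+1) p"
    unfolding beta_moment_def
  proof (intro sum.cong refl)
    fix i
    have "g + real i > 0" using assms by simp
    then have n1: "g + real i \<notin> \<int>\<^sub>\<le>\<^sub>0" by (auto dest: nonpos_Ints_nonpos)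
    have n2: "s \<notin> \<int>\<^sub>\<le>\<^sub>0" using assms by (auto dest: nonpos_Ints_nonpos)
    show "coeff p i * (Beta (g + real i) s - Beta (g + real i + 1) s)
        = coeff p i * Beta (g + real i) (s + 1)"
      using Beta_plus1_plus1[OF n1 n2] by simp
  qed
  finally show ?thesis .
qed

lemma beta_moment_hyp_poly:
  "beta_moment g s (hyp_poly N A B) = (\<Sum>i\<le>N. hyp_coeff N A B i * Beta (g + real i) s)"
  by (simp add: beta_moment_degree_le[OF degree_hyp_poly] coeff_hyp_poly)
lemma power_mult_powr_shift:
  fixes z g :: real
  assumes "z \<ge> 0" "g > 0"
  shows "z ^ i * z powr (g - 1) = z powr (g + real i - 1)"
proof (cases "z = 0")
  case True then show ?thesis by (cases i) auto
next
  case False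
  then have "z > 0" using assms by simp
  then show ?thesis by (simp add: powr_add[symmetric] powr_realpow[symmetric] algebra_simps)
qed

lemma has_integral_beta_moment:
  fixes g s :: real
  assumes g: "g > 0" and s: "s > 0"
  shows "((\<lambda>z. poly p z * (z powr (g - 1) * (1 - z) powr (s - 1)))
           has_integral beta_moment g s p) {0..1}"
    and "(\<lambda>z. poly p z * (z powr (g - 1) * (1 - z) powr (s - 1))) absolutely_integrable_on {0..1}"
proof -
  define F where "F i z = coeff p i * (z powr (g + real i - 1) * (1 - z) powr (s - 1))" for i z
  have eq: "poly p z * (z powr (g - 1) * (1 - z) powr (s - 1)) = (\<Sum>i\<le>degree p. F i z)"
    if "z \<in> {0..1}" for z
  proof -
    have "poly p z * (z powr (g - 1) * (1 - z) powr (s - 1)) =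
        (\<Sum>i\<le>degree p. coeff p i * (z ^ i * z powr (g - 1)) * (1 - z) powr (s - 1))"
      unfolding poly_altdef sum_distrib_right by (simp add: mult_ac)
    also have "\<dots> = (\<Sum>i\<le>degree p. F i z)"
      using that g by (intro sum.cong refl) (simp add: F_def power_mult_powr_shift)
    finally show ?thesis .
  qed
  have gi: "g + real i > 0" for i using g by simp
  have hi: "(F i has_integral coeff p i * Beta (g + real i) s) {0..1}" for i
    unfolding F_def by (intro has_integral_mult_right has_integral_Beta_real gi s)
  have "((\<lambda>z. \<Sum>i\<le>degree p. F i z) has_integral beta_moment g s p) {0..1}"
    unfolding beta_moment_def by (rule has_integral_sum) (auto intro: hi)
  then show "((\<lambda>z. poly p z * (z powr (g - 1) * (1 - z) powr (s - 1)))
                has_integral beta_moment g s p) {0..1}"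
    by (rule has_integral_eq[rotated]) (simp add: eq)
  have ai: "F i absolutely_integrable_on {0..1}" for i
  proof -
    have "(\<lambda>z. z powr (g + real i - 1) * (1 - z) powr (s - 1)) absolutely_integrable_on {0..1}"
      by (rule nonnegative_absolutely_integrable_1)
         (auto intro: integrable_Beta'[of "g + real i" s, simplified] gi s)
    then show ?thesis unfolding F_def
      using absolutely_integrable_scaleR_left[where c = "coeff p i"] by simp
  qed
  have "(\<lambda>z. \<Sum>i\<le>degree p. F i z) absolutely_integrable_on {0..1}"
    by (rule absolutely_integrable_sum) (auto intro: ai)
  then show "(\<lambda>z. poly p z
      * (z powr (g - 1) * (1 - z) powr (s - 1))) absolutely_integrable_on {0..1}"
    by (rule absolutely_integrable_spike[of _ _ "{}"]) (auto simp: eq)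
qed

lemma beta_moment_monom_hyp_poly:
  assumes g: "g > 0" and s: "s > 0"
  shows "beta_moment g s (monom 1 j * hyp_poly N A g)
       = Beta (g + real j) s * (\<Sum>i\<le>N. (-1)^i * real (N choose i)
           * (pochhammer A i * pochhammer (g + real i) j
              / (pochhammer g j * pochhammer (g + s + real j) i)))"
proof -
  have gj: "g + real j > 0" using g by simp
  have "beta_moment g s (monom 1 j * hyp_poly N A g)
      = (\<Sum>i\<le>N. hyp_coeff N A g i * Beta (g + real j + real i) s)"
    by (simp add: beta_moment_monom_mult beta_moment_hyp_poly)
  also have "\<dots> = (\<Sum>i\<le>N. hyp_coeff N A g i
      * (Beta (g + real j) s * pochhammer (g + real j) i / pochhammer (g + real j + s) i))"
    by (intro sum.cong refl) (simp add: Beta_plus_of_nat_left[OF gj s])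
  also have "\<dots> = Beta (g + real j) s * (\<Sum>i\<le>N. (-1)^i * real (N choose i)
           * (pochhammer A i * pochhammer (g + real i) j
              / (pochhammer g j * pochhammer (g + s + real j) i)))"
    unfolding sum_distrib_left
  proof (intro sum.cong refl)
    fix i
    have pos: "pochhammer g i > 0" "pochhammer g j > 0" using g by (auto intro: pochhammer_pos)
    then have shift: "pochhammer (g + real j) i
        = pochhammer g i * pochhammer (g + real i) j / pochhammer g j"
      using pochhammer_mult_shift_commute[of g i j] by (simp add: field_simps)
    show "hyp_coeff N A g i
        * (Beta (g + real j) s * pochhammer (g + real j) i / pochhammer (g + real j + s) i)
      = Beta (g + real j) s * ((-1)^i * real (N choose i)
          * (pochhammer A i * pochhammer (g + real i) j
              / (pochhammer g j * pochhammer (g + s + real j) i)))"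
      unfolding hyp_coeff_binomial shift using pos by (simp add: field_simps add_ac)
  qed
  finally show ?thesis .
qed

text \<open>Up to normalisation, \<open>jacobi_poly N g s\<close> is the Jacobi polynomial
  \<open>P_N^(s - 1, g - 1)(1 - 2 z)\<close>, orthogonal for the weight \<open>z^(g - 1) (1 - z)^(s - 1)\<close> on \<open>[0, 1]\<close>.\<close>

abbreviation jacobi_poly :: "nat \<Rightarrow> real \<Rightarrow> real \<Rightarrow> real poly" where
  "jacobi_poly N g s \<equiv> hyp_poly N (real N + g + s - 1) g"

lemma beta_moment_monom_jacobi_poly_eq_0:
  assumes g: "g > 0" and s: "s > 0" and j: "j < N"
  shows "beta_moment g s (monom 1 j * jacobi_poly N g s) = 0"
proof -
  define M where "M = N - 1 - j"
  define q where "q = pochhammer [:g, 1:] j * pochhammer [:g + s + real j, 1:] M"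
  have "degree q \<le> j + M"
    using degree_mult_le[of "pochhammer [:g, 1:] j" "pochhammer [:g + s + real j, 1:] M"]
      degree_pochhammer_linear_le[of g j] degree_pochhammer_linear_le[of "g + s + real j" M]
    unfolding q_def by linarith
  then have dq: "degree q < N" unfolding M_def using j by linarith
  have summand: "pochhammer (real N + g + s - 1) i * pochhammer (g + real i) j
              / (pochhammer g j * pochhammer (g + s + real j) i)
            = poly q (real i) / (pochhammer g j * pochhammer (g + s + real j) M)" for i
  proof -
    have pos: "pochhammer g j > 0" "pochhammer (g + s + real j) M > 0"
      using g s by (auto intro: pochhammer_pos)
    have A: "real N + g + s - 1 = g + s + real j + real M" unfolding M_def using j by simp
    have "pochhammer (g + s + real j) M * pochhammer (real N + g + s - 1) i
             = pochhammer (g + s + real j) i * pochhammer (g + s + real j + real i) M"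
      unfolding A by (rule pochhammer_mult_shift_commute)
    then have pA: "pochhammer (real N + g + s - 1) i
        = pochhammer (g + s + real j) i * pochhammer (g + s + real j + real i) M
            / pochhammer (g + s + real j) M"
      using pos by (simp add: field_simps)
    have "pochhammer (g + s + real j) i > 0" using g s by (intro pochhammer_pos) simp
    then show ?thesis
      unfolding pA q_def poly_mult poly_pochhammer_linear using pos
      by (simp add: field_simps add_ac)
  qed
  have "(\<Sum>i\<le>N. (-1)^i * real (N choose i)
          * (poly q (real i) / (pochhammer g j * pochhammer (g + s + real j) M)))
      = (\<Sum>i\<le>N. (-1)^i * real (N choose i) * poly q (real i))
          / (pochhammer g j * pochhammer (g + s + real j) M)"
    by (simp add: sum_divide_distrib)
  then show ?thesis
    unfolding beta_moment_monom_hyp_poly[OF g s] summand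
    by (simp add: alternating_binomial_sum_poly_eq_0[OF dq])
qed

definition beta_norm :: "real \<Rightarrow> real \<Rightarrow> nat \<Rightarrow> real" where
  "beta_norm g s N = Beta (g + real N) s * (-1)^N * pochhammer s N * fact N
                     / (pochhammer g N * pochhammer (real N + g + s) N)"

lemma beta_moment_monom_jacobi_poly_self:
  assumes g: "g > 0" and s: "s > 0"
  shows "beta_moment g s (monom 1 N * jacobi_poly N g s) = beta_norm g s N"
proof (cases "N = 0")
  case True
  then show ?thesis by (simp add: beta_moment_def beta_norm_def)
next
  case False
  define A where "A = real N + g + s - 1"
  define Q where "Q = pochhammer [:g, 1:] N"
  have A: "A > 0" unfolding A_def using g s False by simp
  have pg: "pochhammer g N > 0" using g by (rule pochhammer_pos)
  have summand: "pochhammer A i * pochhammer (g + real i) N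
      / (pochhammer g N * pochhammer (g + s + real N) i)
            = A / pochhammer g N * (poly Q (real i) / (real i + A))" for i
  proof -
    define D where "D = real i + A"
    have "pochhammer A i * D = A * pochhammer (A + 1) i"
      unfolding D_def using pochhammer_Suc[of A i] pochhammer_rec[of A i] by (simp add: add.commute)
    moreover have D: "D > 0" unfolding D_def using A by simp
    ultimately have pA: "pochhammer A i = A * pochhammer (A + 1) i / D" by (simp add: field_simps)
    have "g + s + real N = A + 1" unfolding A_def by simp
    moreover have "pochhammer (A + 1) i > 0" using A by (intro pochhammer_pos) simp
    ultimately show ?thesis
      unfolding pA D_def[symmetric] Q_def poly_pochhammer_linear using pg D
      by (simp add: field_simps)
  qed
  have sum: "(\<Sum>i\<le>N. (-1)^i * real (N choose i) * (poly Q (real i) / (real i + A)))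
      = (-1)^N * pochhammer s N * fact N / (A * pochhammer (A + 1) N)"
  proof -
    have "poly Q (- A) = pochhammer (- (s + real N - 1)) N"
      unfolding Q_def A_def poly_pochhammer_linear by (simp add: algebra_simps)
    also have "\<dots> = (-1)^N * pochhammer s N" by (subst pochhammer_minus) simp
    finally show ?thesis
      using alternating_binomial_sum_poly_div_linear[OF _ A, of Q N]
        degree_pochhammer_linear_le[of g N]
      unfolding Q_def pochhammer_rec[of A N] by simp
  qed
  have "(\<Sum>i\<le>N. (-1)^i * real (N choose i) * (A / pochhammer g N * (poly Q (real i) / (real i + A))))
      = A / pochhammer g N * (\<Sum>i\<le>N. (-1)^i * real (N choose i) * (poly Q (real i) / (real i + A)))"
    by (simp add: sum_distrib_left mult_ac)
  moreover have "A + 1 = real N + g + s" unfolding A_def by simp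
  ultimately show ?thesis
    unfolding beta_norm_def beta_moment_monom_hyp_poly[OF g s] A_def[symmetric] summand sum
    using A pg by (simp add: field_simps)
qed

lemma beta_moment_jacobi_poly_orthogonal:
  assumes g: "g > 0" and s: "s > 0" and p: "degree p < N \<or> p = 0"
  shows "beta_moment g s (p * jacobi_poly N g s) = 0"
proof (cases "p = 0")
  case True then show ?thesis by simp
next
  case False
  with p have dp: "degree p < N" by simp
  have "p * jacobi_poly N g s
      = (\<Sum>j\<le>degree p. smult (coeff p j) (monom 1 j * jacobi_poly N g s))"
    by (subst (1) poly_as_sum_of_monoms[symmetric]) (simp add: sum_distrib_right smult_monom_mult)
  then show ?thesis
    using dp by (simp add: beta_moment_sum beta_moment_smult
      beta_moment_monom_jacobi_poly_eq_0[OF g s])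
qed

lemma beta_moment_jacobi_poly_leading:
  assumes g: "g > 0" and s: "s > 0" and p: "degree p \<le> N"
  shows "beta_moment g s (p * jacobi_poly N g s) = coeff p N * beta_norm g s N"
proof -
  define q where "q = p - monom (coeff p N) N"
  have cq: "coeff q N = 0" unfolding q_def by simp
  have dq: "degree q \<le> N" unfolding q_def using p
    by (intro degree_diff_le) (auto simp: degree_monom_le)
  have q0: "degree q < N \<or> q = 0"
  proof (rule ccontr)
    assume "\<not> ?thesis"
    then have "degree q = N" "q \<noteq> 0" using dq by auto
    then show False using cq by (metis leading_coeff_0_iff)
  qed
  have "p = monom (coeff p N) N + q" unfolding q_def by simp
  then have "beta_moment g s (p * jacobi_poly N g s)
      = beta_moment g s (smult (coeff p N) (monom 1 N * jacobi_poly N g s))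
        + beta_moment g s (q * jacobi_poly N g s)"
    by (metis beta_moment_add distrib_right smult_monom_mult mult.right_neutral)
  also have "\<dots> = coeff p N * beta_norm g s N"
    using beta_moment_jacobi_poly_orthogonal[OF g s q0] beta_moment_monom_jacobi_poly_self[OF g s]
    by (simp add: beta_moment_smult)
  finally show ?thesis .
qed

section \<open>The quadratic substitution\<close>

definition bigJ_var :: "real \<Rightarrow> real \<Rightarrow> real" where
  "bigJ_var c x = (x^2 - 1) / (c^2 - 1)"

lemma bigJ_var_minus [simp]: "bigJ_var c (- x) = bigJ_var c x"
  by (simp add: bigJ_var_def)

lemma bigJ_var_image:
  fixes c :: real
  assumes c: "c^2 > 1"
  shows "bigJ_var c ` {1..\<bar>c\<bar>} = {0..1}"
proof -
  have c1: "c^2 - 1 > 0" using c by simp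
  show ?thesis unfolding bigJ_var_def
  proof (intro equalityI subsetI)
    fix z assume "z \<in> (\<lambda>x. (x^2 - 1) / (c^2 - 1)) ` {1..\<bar>c\<bar>}"
    then obtain x where x: "x \<in> {1..\<bar>c\<bar>}" and z: "z = (x^2 - 1) / (c^2 - 1)" by auto
    have "x^2 \<ge> 1" using x by simp
    moreover have "x^2 \<le> \<bar>c\<bar>^2" using x by (intro power_mono) auto
    ultimately show "z \<in> {0..1}" unfolding z using c1 by (simp add: field_simps)
  next
    fix z :: real assume z: "z \<in> {0..1}"
    define x where "x = sqrt (1 + (c^2 - 1) * z)"
    have q: "1 + (c^2 - 1) * z \<ge> 1" using z c1 by simp
    have q2: "1 + (c^2 - 1) * z \<le> c^2"
    proof -
      have "(c^2 - 1) * z \<le> (c^2 - 1) * 1" using z c1 by (intro mult_left_mono) auto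
      then show ?thesis by simp
    qed
    have "x \<ge> 1" unfolding x_def using q by simp
    moreover have "x \<le> \<bar>c\<bar>" unfolding x_def using q2 real_sqrt_le_mono[OF q2] by simp
    moreover have "x^2 = 1 + (c^2 - 1) * z" unfolding x_def using q by simp
    ultimately show "z \<in> (\<lambda>x. (x^2 - 1) / (c^2 - 1)) ` {1..\<bar>c\<bar>}"
      using c1 by (intro image_eqI[of _ _ x]) auto
  qed
qed

lemma has_absolute_integral_bigJ_var_substitution:
  fixes f :: "real \<Rightarrow> real"
  assumes c: "c^2 > 1" and f: "f absolutely_integrable_on {0..1}"
  shows "(\<lambda>x. 2 * x / (c^2 - 1) * f (bigJ_var c x)) absolutely_integrable_on {1..\<bar>c\<bar>}"
    and "((\<lambda>x. 2 * x / (c^2 - 1) * f (bigJ_var c x)) has_integral integral {0..1} f) {1..\<bar>c\<bar>}"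
proof -
  have c1: "c^2 - 1 > 0" using c by simp
  have der: "(bigJ_var c has_field_derivative (2 * x / (c^2 - 1))) (at x within {1..\<bar>c\<bar>})" for x
    unfolding bigJ_var_def using c1 by (auto intro!: derivative_eq_intros)
  have inj: "inj_on (bigJ_var c) {1..\<bar>c\<bar>}"
  proof (rule inj_onI)
    fix x y assume x: "x \<in> {1..\<bar>c\<bar>}" and y: "y \<in> {1..\<bar>c\<bar>}" and "bigJ_var c x = bigJ_var c y"
    then have "x^2 = y^2" unfolding bigJ_var_def using c1 by (simp add: divide_cancel_right)
    then show "x = y" using x y by (simp add: power2_eq_iff_nonneg)
  qed
  have abs_eq: "\<bar>2 * x / (c^2 - 1)\<bar> * f (bigJ_var c x) = 2 * x / (c^2 - 1) * f (bigJ_var c x)"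
    if "x \<in> {1..\<bar>c\<bar>}" for x
    using that c1 by simp
  have "(\<lambda>x. \<bar>2 * x / (c^2 - 1)\<bar> * f (bigJ_var c x)) absolutely_integrable_on {1..\<bar>c\<bar>}
      \<and> integral {1..\<bar>c\<bar>} (\<lambda>x. \<bar>2 * x / (c^2 - 1)\<bar> * f (bigJ_var c x)) = integral {0..1} f"
    using has_absolute_integral_change_of_variables_1'[OF _ der inj, of f "integral {0..1} f"] f
    unfolding bigJ_var_image[OF c] by simp
  then have "(\<lambda>x. 2 * x / (c^2 - 1) * f (bigJ_var c x)) absolutely_integrable_on {1..\<bar>c\<bar>}"
    and "integral {1..\<bar>c\<bar>} (\<lambda>x. 2 * x / (c^2 - 1) * f (bigJ_var c x)) = integral {0..1} f"
    using absolutely_integrable_spike[OF _ negligible_empty] integral_cong[of "{1..\<bar>c\<bar>}"] abs_eq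
    by (metis (no_types, lifting) Diff_empty)+
  then show "(\<lambda>x. 2 * x / (c^2 - 1) * f (bigJ_var c x)) absolutely_integrable_on {1..\<bar>c\<bar>}"
    "((\<lambda>x. 2 * x / (c^2 - 1) * f (bigJ_var c x)) has_integral integral {0..1} f) {1..\<bar>c\<bar>}"
    using absolutely_integrable_on_def has_integral_integrable_integral by metis+
qed

lemma beta_weight_bigJ_var:
  fixes c g s x :: real
  assumes c: "c^2 > 1" and x: "1 \<le> x"
  shows "2 * x / (c^2 - 1) * ((c^2 - 1) powr (g + s - 1) / 2
           * (p * (bigJ_var c x powr (g - 1) * (1 - bigJ_var c x) powr (s - 1))))
       = x * p * ((x^2 - 1) powr (g - 1) * (c^2 - x^2) powr (s - 1))"
proof -
  have c1: "c^2 - 1 > 0" using c by simp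
  have e1: "1 - bigJ_var c x = (c^2 - x^2) / (c^2 - 1)"
    unfolding bigJ_var_def using c1 by (simp add: field_simps)
  have "(c^2 - 1) powr (g + s - 1) = (c^2 - 1) powr (1 + ((g - 1) + (s - 1)))"
    by (simp add: algebra_simps)
  also have "\<dots> = (c^2 - 1) powr 1 * ((c^2 - 1) powr (g - 1) * (c^2 - 1) powr (s - 1))"
    by (simp only: powr_add)
  finally have e2: "(c^2 - 1) powr (g + s - 1)
      = (c^2 - 1) * ((c^2 - 1) powr (g - 1) * (c^2 - 1) powr (s - 1))"
    using c1 by simp
  have "(c^2 - 1) powr (g - 1) > 0" "(c^2 - 1) powr (s - 1) > 0" using c1 by auto
  then show ?thesis
    unfolding e1 e2 unfolding bigJ_var_def powr_divide using x c1 by (simp add: field_simps)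
qed

lemma has_integral_beta_moment_bigJ_var:
  fixes c g s :: real and W :: "real poly"
  assumes g: "g > 0" and s: "s > 0" and c: "c^2 > 1"
  defines "m \<equiv> \<lambda>x. x * poly W (bigJ_var c x) * ((x^2 - 1) powr (g - 1) * (c^2 - x^2) powr (s - 1))"
  shows "m absolutely_integrable_on {1..\<bar>c\<bar>}"
    and "(m has_integral ((c^2 - 1) powr (g + s - 1) / 2 * beta_moment g s W)) {1..\<bar>c\<bar>}"
proof -
  define K where "K = (c^2 - 1) powr (g + s - 1) / 2"
  define f where "f z = K * (poly W z * (z powr (g - 1) * (1 - z) powr (s - 1)))" for z
  have f: "f absolutely_integrable_on {0..1}"
    unfolding f_def using absolutely_integrable_scaleR_left[OF has_integral_beta_moment(2)[OF g s]]
    by simp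
  have int_f: "integral {0..1} f = K * beta_moment g s W"
    unfolding f_def using has_integral_beta_moment(1)[OF g s, of W]
    by (intro integral_unique has_integral_mult_right)
  have eq: "2 * x / (c^2 - 1) * f (bigJ_var c x) = m x" if "x \<in> {1..\<bar>c\<bar>}" for x
    unfolding f_def K_def m_def using beta_weight_bigJ_var[OF c] that by simp
  note sub = has_absolute_integral_bigJ_var_substitution[OF c f]
  show "m absolutely_integrable_on {1..\<bar>c\<bar>}"
    using sub(1) by (rule absolutely_integrable_spike[OF _ negligible_empty]) (metis Diff_empty eq)
  from sub(2) show "(m has_integral ((c^2 - 1) powr (g + s - 1) / 2 * beta_moment g s W)) {1..\<bar>c\<bar>}"
    unfolding int_f K_def[symmetric] by (rule has_integral_eq[rotated]) (rule eq)
qed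

section \<open>The univariate weight\<close>

lemma absolutely_integrable_continuous_mult:
  fixes B m :: "real \<Rightarrow> real"
  assumes "continuous_on {l..u} B" "m absolutely_integrable_on {l..u}"
  shows "(\<lambda>x. B x * m x) absolutely_integrable_on {l..u}"
proof (rule absolutely_integrable_bounded_measurable_product_real)
  show "B \<in> borel_measurable (lebesgue_on {l..u})"
    using assms(1) by (rule continuous_imp_measurable_on_sets_lebesgue) simp
  show "bounded (B ` {l..u})"
    using assms(1) by (intro compact_imp_bounded compact_continuous_image) auto
qed (use assms in auto)

definition bigJ_weight :: "real \<Rightarrow> real \<Rightarrow> real \<Rightarrow> real \<Rightarrow> real" where
  "bigJ_weight a b c x =
     sgn (c * x) * (1 + x) * (c - x)
         * ((x^2 - 1) powr ((a - 1) / 2) * (c^2 - x^2) powr ((b - 1) / 2))"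

definition bigJ_domain :: "real \<Rightarrow> real set" where
  "bigJ_domain c = {- \<bar>c\<bar> .. -1} \<union> {1 .. \<bar>c\<bar>}"

lemma absolutely_integrable_bigJ_weight:
  fixes a b c :: real and B :: "real \<Rightarrow> real"
  assumes a: "a > -1" and b: "b > -1" and c: "c^2 > 1" and B: "continuous_on (bigJ_domain c) B"
  shows "(\<lambda>x. bigJ_weight a b c x * B x) absolutely_integrable_on bigJ_domain c"
proof -
  define C where "C = \<bar>c\<bar>"
  have C: "C > 1" unfolding C_def using c
    by (metis abs_le_square_iff abs_one not_le one_power2 order.strict_iff_not)
  define m where "m x = x * ((x^2 - 1) powr ((a - 1) / 2) * (c^2 - x^2) powr ((b - 1) / 2))" for x
  have m: "m absolutely_integrable_on {1..C}"
    using has_integral_beta_moment_bigJ_var(1)[of "(a + 1) / 2" "(b + 1) / 2" c 1] a b c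
    unfolding C_def m_def by (simp add: diff_divide_distrib)
  have pos: "bigJ_weight a b c x * B x = (sgn c * (1 + x) * (c - x) * B x / x) * m x"
    and neg: "bigJ_weight a b c (- x) * B (- x) = (- sgn c * (1 - x) * (c + x) * B (- x) / x) * m x"
    if "x \<in> {1..C}" for x
    using that C by (auto simp: bigJ_weight_def m_def sgn_mult)
  have sub: "{1..C} \<subseteq> bigJ_domain c" "uminus ` {1..C} \<subseteq> bigJ_domain c"
    unfolding bigJ_domain_def C_def by auto
  have "continuous_on {1..C} (\<lambda>x. sgn c * (1 + x) * (c - x) * B x / x)"
    using C continuous_on_subset[OF B sub(1)] by (intro continuous_intros) auto
  from absolutely_integrable_continuous_mult[OF this m]
  have right: "(\<lambda>x. bigJ_weight a b c x * B x) absolutely_integrable_on {1..C}"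
    by (rule absolutely_integrable_spike[OF _ negligible_empty]) (simp add: pos)
  have "continuous_on {1..C} (B \<circ> uminus)"
    using continuous_on_subset[OF B sub(2)] by (intro continuous_on_compose continuous_intros)
  then have "continuous_on {1..C} (\<lambda>x. - sgn c * (1 - x) * (c + x) * B (- x) / x)"
    using C by (intro continuous_intros) (auto simp: o_def)
  from absolutely_integrable_continuous_mult[OF this m]
  have "(\<lambda>x. bigJ_weight a b c (- x) * B (- x)) absolutely_integrable_on {1..C}"
    by (rule absolutely_integrable_spike[OF _ negligible_empty]) (simp add: neg)
  then have left: "(\<lambda>x. bigJ_weight a b c x * B x) absolutely_integrable_on {-C..-1}"
    using absolutely_integrable_reflect_real[where f = "\<lambda>x. bigJ_weight a b c (- x) * B (- x)"]
    by simp
  show ?thesis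
    unfolding bigJ_domain_def C_def[symmetric] by (rule absolutely_integrable_Un[OF left right])
qed

text \<open>Pairing \<open>x\<close> with \<open>-x\<close> folds the symmetric domain onto \<open>{1..\<bar>c\<bar>}\<close>; the odd part \<open>x * V\<close>
  survives through \<open>c - x\<^sup>2 = (c - 1) * (1 - (c + 1) * z)\<close>, where \<open>z = bigJ_var c x\<close>.\<close>

lemma bigJ_weight_fold:
  fixes a b c x :: real and U V :: "real poly"
  assumes x: "x > 0" and c: "c^2 \<noteq> 1"
  shows "bigJ_weight a b c x * (poly U (bigJ_var c x) + x * poly V (bigJ_var c x))
       + bigJ_weight a b c (- x) * (poly U (bigJ_var c x) - x * poly V (bigJ_var c x))
       = 2 * sgn c * (c - 1) * (x * poly (U + [:1, -(c + 1):] * V) (bigJ_var c x)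
           * ((x^2 - 1) powr ((a - 1) / 2) * (c^2 - x^2) powr ((b - 1) / 2)))"
proof -
  define z where "z = bigJ_var c x"
  define P where "P = (x^2 - 1) powr ((a - 1) / 2) * (c^2 - x^2) powr ((b - 1) / 2)"
  have z: "(c - 1) * (1 - (c + 1) * z) = c - x^2"
    unfolding z_def bigJ_var_def using c by (simp add: field_simps power2_eq_square)
  have "bigJ_weight a b c x * (poly U z + x * poly V z) + bigJ_weight a b c (- x)
      * (poly U z - x * poly V z)
      = sgn c * P
          * ((1 + x) * (c - x) * (poly U z + x * poly V z) - (1 - x) * (c + x)
              * (poly U z - x * poly V z))"
    unfolding bigJ_weight_def P_def using x by (simp add: sgn_mult algebra_simps)
  also have "\<dots> = sgn c * P * (2 * x * ((c - 1) * poly U z + (c - x^2) * poly V z))"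
    by (simp add: algebra_simps power2_eq_square)
  also have "\<dots> = 2 * sgn c * (c - 1) * (x * (poly U z + (1 - (c + 1) * z) * poly V z) * P)"
    unfolding z[symmetric] by (simp add: algebra_simps)
  finally show ?thesis unfolding z_def P_def by (simp add: algebra_simps)
qed

lemma has_integral_bigJ_weight:
  fixes a b c :: real and U V :: "real poly"
  assumes a: "a > -1" and b: "b > -1" and c: "c^2 > 1"
  shows "((\<lambda>x. bigJ_weight a b c x * (poly U (bigJ_var c x) + x * poly V (bigJ_var c x)))
           has_integral (sgn c * (c^2 - 1) powr ((a + b) / 2) * (c - 1)
             * beta_moment ((a + 1) / 2) ((b + 1) / 2) (U + [:1, -(c + 1):] * V))) (bigJ_domain c)"
    (is "(?H has_integral ?I) _")
proof -
  define C where "C = \<bar>c\<bar>"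
  define F where "F x = 2 * sgn c * (c - 1) * (x * poly (U + [:1, -(c + 1):] * V) (bigJ_var c x)
    * ((x^2 - 1) powr ((a - 1) / 2) * (c^2 - x^2) powr ((b - 1) / 2)))" for x
  have C: "C > 1" unfolding C_def using c
    by (metis abs_le_square_iff abs_one not_le one_power2 order.strict_iff_not)
  have dom: "bigJ_domain c = {-C..-1} \<union> {1..C}" unfolding bigJ_domain_def C_def ..
  have "continuous_on (bigJ_domain c) (\<lambda>x. poly U (bigJ_var c x) + x * poly V (bigJ_var c x))"
    unfolding bigJ_var_def using c by (intro continuous_intros) auto
  then have "?H integrable_on bigJ_domain c"
    using absolutely_integrable_bigJ_weight[OF a b c] absolutely_integrable_on_def by blast
  then obtain I1 I2 where I1: "(?H has_integral I1) {1..C}" and I2: "(?H has_integral I2) {-C..-1}"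
    unfolding dom by (meson integrable_on_subinterval has_integral_integral sup_ge1 sup_ge2)
  have "((\<lambda>x. ?H (- x)) has_integral I2) {1..C}"
    using has_integral_reflect_real[of ?H I2 "-1" "-C"] I2 by simp
  then have "((\<lambda>x. ?H x + ?H (- x)) has_integral (I1 + I2)) {1..C}"
    by (rule has_integral_add[OF I1])
  then have "(F has_integral (I1 + I2)) {1..C}"
  proof (rule has_integral_eq[rotated])
    fix x assume "x \<in> {1..C}"
    then have "x > 0" "c^2 \<noteq> 1" using C c by auto
    from bigJ_weight_fold[OF this, of a b U V] show "?H x + ?H (- x) = F x"
      unfolding F_def by simp
  qed
  moreover have "(F has_integral ?I) {1..C}"
  proof -
    have g: "(a + 1) / 2 > 0" "(b + 1) / 2 > 0" using a b by auto
    have e: "(a + 1) / 2 - 1 = (a - 1) / 2" "(b + 1) / 2 - 1 = (b - 1) / 2"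
      "(a + 1) / 2 + (b + 1) / 2 - 1 = (a + b) / 2" by (simp_all add: field_simps)
    have "2 * sgn c * (c - 1) * ((c^2 - 1) powr ((a + b) / 2) / 2
          * beta_moment ((a + 1) / 2) ((b + 1) / 2) (U + [:1, -(c + 1):] * V)) = ?I"
      by simp
    with has_integral_mult_right[OF has_integral_beta_moment_bigJ_var(2)[OF g c,
          of "U + [:1, -(c + 1):] * V"], of "2 * sgn c * (c - 1)"]
    show ?thesis unfolding e C_def F_def by argo
  qed
  ultimately have "I1 + I2 = ?I" by (rule has_integral_unique)
  moreover have "(?H has_integral (I2 + I1)) ({-C..-1} \<union> {1..C})"
    by (rule has_integral_Un[OF I2 I1]) (use C in auto)
  ultimately show ?thesis unfolding dom by (simp add: add.commute)
qed
section \<open>Orthogonality of the univariate polynomials\<close>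

text \<open>The two \<open>\<^sub>2F\<^sub>1\<close> terms in the definition of \<open>bigJ\<close> become \<open>bigJ_P\<close> and \<open>bigJ_Q\<close>
  (\<open>bigJ_eq_P_Q\<close>). For \<open>n = 0\<close> the truncated index \<open>n div 2 - 1\<close> is harmless: its scalar factor
  vanishes.\<close>

definition bigJ_param :: "nat \<Rightarrow> real \<Rightarrow> real \<Rightarrow> real" where
  "bigJ_param n a b = real (n div 2) + (a + 1) / 2 + (b + 1) / 2"

definition bigJ_P :: "nat \<Rightarrow> real \<Rightarrow> real \<Rightarrow> real poly" where
  "bigJ_P n a b = hyp_poly (n div 2) (bigJ_param n a b) ((a + 1) / 2)"

definition bigJ_Q :: "nat \<Rightarrow> real \<Rightarrow> real \<Rightarrow> real \<Rightarrow> real poly" where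
  "bigJ_Q n a b c =
     (if even n
      then smult (real (n div 2) / ((a + 1) / 2 * (1 + c)))
             (hyp_poly (n div 2 - 1) (bigJ_param n a b) ((a + 1) / 2 + 1))
      else smult (- bigJ_param n a b / ((a + 1) / 2 * (1 + c)))
             (hyp_poly (n div 2) (bigJ_param n a b + 1) ((a + 1) / 2 + 1)))"

lemma bigJ_var_eq: "(1 - x^2) / (1 - c^2) = bigJ_var c x"
  unfolding bigJ_var_def by (metis minus_diff_eq minus_divide_divide)

lemma bigJ_eq_P_Q_even:
  assumes a: "a > -1" and c: "c \<noteq> -1" and n: "n = 2 * N"
  shows "bigJ n x a b c
      = poly (bigJ_P n a b) (bigJ_var c x) + (1 - x) * poly (bigJ_Q n a b c) (bigJ_var c x)"
proof -
  have N: "n div 2 = N" unfolding n by simp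
  have e1: "- real n / 2 = - real N" unfolding n by simp
  have e2: "(real n + a + b + 2) / 2 = bigJ_param n a b"
    unfolding bigJ_param_def N unfolding n by (simp add: field_simps)
  have e3: "(a + 3) / 2 = (a + 1) / 2 + 1" by simp
  have e4: "real n * (1 - x) / ((1 + c) * (a + 1)) = (1 - x) * (real N / ((a + 1) / 2 * (1 + c)))"
    unfolding n using a c by (simp add: field_simps)
  show ?thesis
  proof (cases "N = 0")
    case True
    then show ?thesis
      unfolding bigJ_def Let_def bigJ_var_eq bigJ_P_def bigJ_Q_def N
      using n by (simp add: hyp2F1_minus_of_nat[of 0, simplified])
  next
    case False
    have e5: "1 - real n / 2 = - real (N - 1)" unfolding n using False by simp
    show ?thesis unfolding bigJ_def Let_def bigJ_var_eq bigJ_P_def bigJ_Q_def N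
      using n unfolding e1 e2 e3 e5 e4 by (simp add: hyp2F1_minus_of_nat)
  qed
qed

lemma bigJ_eq_P_Q_odd:
  assumes a: "a > -1" and c: "c \<noteq> -1" and n: "n = 2 * N + 1"
  shows "bigJ n x a b c
      = poly (bigJ_P n a b) (bigJ_var c x) + (1 - x) * poly (bigJ_Q n a b c) (bigJ_var c x)"
proof -
  have N: "n div 2 = N" unfolding n by simp
  have e1: "- (real n - 1) / 2 = - real N" unfolding n by simp
  have e2: "(real n + a + b + 1) / 2 = bigJ_param n a b"
    unfolding bigJ_param_def N unfolding n by (simp add: field_simps)
  have e2': "(real n + a + b + 3) / 2 = bigJ_param n a b + 1"
    unfolding bigJ_param_def N unfolding n by (simp add: field_simps)
  have e3: "(a + 3) / 2 = (a + 1) / 2 + 1" by simp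
  have e4: "(real n + a + b + 1) * (1 - x) / ((1 + c) * (a + 1))
      = - ((1 - x) * (- bigJ_param n a b / ((a + 1) / 2 * (1 + c))))"
  proof -
    have "(1 + c) * (a + 1) \<noteq> 0" using a c by auto
    then show ?thesis unfolding e2[symmetric] by (simp add: field_simps)
  qed
  show ?thesis unfolding bigJ_def Let_def bigJ_var_eq bigJ_P_def bigJ_Q_def N
    using n unfolding e1 e2 e2' e3 e4 by (simp add: hyp2F1_minus_of_nat)
qed

lemma bigJ_eq_P_Q:
  assumes "a > -1" and "c \<noteq> -1"
  shows "bigJ n x a b c
      = poly (bigJ_P n a b) (bigJ_var c x) + (1 - x) * poly (bigJ_Q n a b c) (bigJ_var c x)"
  using bigJ_eq_P_Q_even[OF assms, of n "n div 2"] bigJ_eq_P_Q_odd[OF assms, of n "n div 2"]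
  by (cases "even n") (simp_all add: odd_two_times_div_two_succ)

definition bigJ_even :: "nat \<Rightarrow> real \<Rightarrow> real \<Rightarrow> real \<Rightarrow> real poly" where
  "bigJ_even n a b c = bigJ_P n a b + bigJ_Q n a b c"

definition bigJ_odd :: "nat \<Rightarrow> real \<Rightarrow> real \<Rightarrow> real \<Rightarrow> real poly" where
  "bigJ_odd n a b c = - bigJ_Q n a b c"

lemma degree_bigJ_P: "degree (bigJ_P n a b) \<le> n div 2"
  unfolding bigJ_P_def by (rule degree_hyp_poly)

lemma bigJ_Q_0: "bigJ_Q 0 a b c = 0"
  by (simp add: bigJ_Q_def)

lemma degree_bigJ_Q: "degree (bigJ_Q n a b c) \<le> (n - 1) div 2"
proof (cases "even n")
  case True
  then obtain N where n: "n = 2 * N" by blast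
  have "degree (hyp_poly (N - 1) (bigJ_param n a b) ((a + 1) / 2 + 1)) \<le> N - 1"
    by (rule degree_hyp_poly)
  moreover have "(n - 1) div 2 = N - 1" unfolding n by (cases N) auto
  ultimately show ?thesis using True unfolding bigJ_Q_def n
    by (auto intro: order.trans[OF degree_smult_le])
next
  case False
  then obtain N where n: "n = 2 * N + 1" by (metis oddE)
  have "degree (hyp_poly N (bigJ_param n a b + 1) ((a + 1) / 2 + 1)) \<le> N" by (rule degree_hyp_poly)
  moreover have "(n - 1) div 2 = N" "n div 2 = N" unfolding n by auto
  ultimately show ?thesis using False unfolding bigJ_Q_def n
    by (auto intro: order.trans[OF degree_smult_le])
qed

lemma degree_bigJ_even: "degree (bigJ_even n a b c) \<le> n div 2"
  unfolding bigJ_even_def using degree_bigJ_P[of n a b] degree_bigJ_Q[of n a b c]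
  by (intro degree_add_le) (auto intro: order.trans[OF _ div_le_mono])

lemma degree_bigJ_odd: "degree (bigJ_odd n a b c) \<le> (n - 1) div 2"
  unfolding bigJ_odd_def using degree_bigJ_Q[of n a b c] by simp

lemma bigJ_odd_0: "bigJ_odd 0 a b c = 0"
  by (simp add: bigJ_odd_def bigJ_Q_0)

definition bigJ_kappa :: "nat \<Rightarrow> real \<Rightarrow> real \<Rightarrow> real" where
  "bigJ_kappa n a b =
     (if even n then ((a + 1) / 2 + real (n div 2)) / ((a + 1) / 2)
      else ((a + 1) / 2 - bigJ_param n a b) / ((a + 1) / 2))"

lemma bigJ_P_plus_var_Q:
  assumes a: "a > -1" and c: "c \<noteq> -1"
  shows "bigJ_P n a b + [:0, 1 + c:] * bigJ_Q n a b c
       = jacobi_poly ((n + 1) div 2) ((a + 1) / 2) ((b + 1) / 2)"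
proof -
  define g where "g = (a + 1) / 2"
  have g: "g > 0" unfolding g_def using a by simp
  have c1: "1 + c \<noteq> 0" using c by (metis add.commute add_eq_0_iff)
  show ?thesis
  proof (cases "even n")
    case True
    then obtain N where n: "n = 2 * N" by blast
    have d: "(n + 1) div 2 = N" "n div 2 = N" unfolding n by auto
    have e: "[:0, 1 + c:] * smult (real N / (g * (1 + c))) p = smult (real N / g) (pCons 0 p)" for p
      using c1 by simp
    have "bigJ_param n a b - 1 = real N + g + (b + 1) / 2 - 1" unfolding bigJ_param_def d g_def
      by simp
    then show ?thesis using True hyp_poly_contig_a_minus_1[OF g, of N "bigJ_param n a b"] c1
      unfolding bigJ_P_def bigJ_Q_def d g_def[symmetric] e by (simp add: add.assoc)
  next
    case False
    then obtain N where n: "n = 2 * N + 1" by (metis oddE)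
    have d: "(n + 1) div 2 = Suc N" "n div 2 = N" unfolding n by auto
    have e: "[:0, 1 + c:] * smult (- bigJ_param n a b / (g * (1 + c))) p
        = - smult (bigJ_param n a b / g) (pCons 0 p)" for p
      using c1 by simp
    have A: "bigJ_param n a b = real (Suc N) + g + (b + 1) / 2 - 1" unfolding bigJ_param_def d g_def
      by simp
    have "bigJ_P n a b + [:0, 1 + c:] * bigJ_Q n a b c
        = hyp_poly N (bigJ_param n a b) g + [:0, 1 + c:]
            * smult (- bigJ_param n a b / (g * (1 + c)))
                (hyp_poly N (bigJ_param n a b + 1) (g + 1))"
      unfolding bigJ_P_def bigJ_Q_def d g_def[symmetric] using False by simp
    also have "\<dots>
        = hyp_poly N (bigJ_param n a b) g
            - smult (bigJ_param n a b / g) (pCons 0 (hyp_poly N (bigJ_param n a b + 1) (g + 1)))"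
      unfolding e add_uminus_conv_diff by (rule refl)
    also have "\<dots> = hyp_poly (Suc N) (bigJ_param n a b) g" by (rule hyp_poly_contig_Suc[OF g])
    finally show ?thesis unfolding A d g_def by simp
  qed
qed

lemma bigJ_P_plus_Q:
  assumes a: "a > -1" and c: "c \<noteq> -1"
  shows "bigJ_P n a b + smult (1 + c) (bigJ_Q n a b c)
       = smult (bigJ_kappa n a b) (jacobi_poly (n div 2) ((a + 1) / 2 + 1) ((b + 1) / 2))"
proof -
  define g where "g = (a + 1) / 2"
  have g: "g > 0" unfolding g_def using a by simp
  have c1: "1 + c \<noteq> 0" using c by (metis add.commute add_eq_0_iff)
  have A: "bigJ_param n a b = real (n div 2) + (g + 1) + (b + 1) / 2 - 1"
    unfolding bigJ_param_def g_def by simp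
  show ?thesis
  proof (cases "even n")
    case True
    then obtain N where n: "n = 2 * N" by blast
    have d: "n div 2 = N" unfolding n by auto
    have e: "smult (1 + c) (smult (real N / (g * (1 + c))) p) = smult (real N / g) p" for p
      using c1 by simp
    show ?thesis using True hyp_poly_contig_c_plus_1[OF g, of N "bigJ_param n a b"] A c1
      unfolding bigJ_P_def bigJ_Q_def bigJ_kappa_def d g_def[symmetric] e by (simp add: add.commute)
  next
    case False
    then obtain N where n: "n = 2 * N + 1" by (metis oddE)
    have d: "n div 2 = N" unfolding n by auto
    have e: "smult (1 + c) (smult (- bigJ_param n a b / (g * (1 + c))) p)
        = - smult (bigJ_param n a b / g) p" for p
      using c1 by simp
    have "bigJ_P n a b + smult (1 + c) (bigJ_Q n a b c)
        = hyp_poly N (bigJ_param n a b) g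
            + smult (1 + c) (smult (- bigJ_param n a b / (g * (1 + c)))
                (hyp_poly N (bigJ_param n a b + 1) (g + 1)))"
      unfolding bigJ_P_def bigJ_Q_def d g_def[symmetric] using False by simp
    also have "\<dots>
        = hyp_poly N (bigJ_param n a b) g
            - smult (bigJ_param n a b / g) (hyp_poly N (bigJ_param n a b + 1) (g + 1))"
      unfolding e add_uminus_conv_diff by (rule refl)
    also have "\<dots> = smult ((g - bigJ_param n a b) / g) (hyp_poly N (bigJ_param n a b) (g + 1))"
      by (rule hyp_poly_contig_a_c_plus_1[OF g])
    finally show ?thesis using False unfolding A bigJ_kappa_def d g_def by simp
  qed
qed

definition bigJ_prod_even :: "nat \<Rightarrow> nat \<Rightarrow> real \<Rightarrow> real \<Rightarrow> real \<Rightarrow> real poly" where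
  "bigJ_prod_even n m a b c =
     bigJ_even n a b c * bigJ_even m a b c + [:1, c^2 - 1:] * bigJ_odd n a b c * bigJ_odd m a b c"

definition bigJ_prod_odd :: "nat \<Rightarrow> nat \<Rightarrow> real \<Rightarrow> real \<Rightarrow> real \<Rightarrow> real poly" where
  "bigJ_prod_odd n m a b c =
     bigJ_even n a b c * bigJ_odd m a b c + bigJ_odd n a b c * bigJ_even m a b c"

abbreviation bigJ_prod_fold :: "nat \<Rightarrow> nat \<Rightarrow> real \<Rightarrow> real \<Rightarrow> real \<Rightarrow> real poly" where
  "bigJ_prod_fold n m a b c \<equiv> bigJ_prod_even n m a b c + [:1, -(c + 1):] * bigJ_prod_odd n m a b c"

lemma bigJ_eq_even_odd:
  assumes a: "a > -1" and c: "c \<noteq> -1"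
  shows "bigJ n x a b c
      = poly (bigJ_even n a b c) (bigJ_var c x) + x * poly (bigJ_odd n a b c) (bigJ_var c x)"
  unfolding bigJ_eq_P_Q[OF a c] bigJ_even_def bigJ_odd_def by (simp add: algebra_simps)

lemma bigJ_mult_eq:
  assumes a: "a > -1" and c: "c^2 > 1"
  shows "bigJ n x a b c * bigJ m x a b c
      = poly (bigJ_prod_even n m a b c) (bigJ_var c x)
        + x * poly (bigJ_prod_odd n m a b c) (bigJ_var c x)"
proof -
  have c1: "c \<noteq> -1" using c by auto
  have x2: "x^2 = 1 + (c^2 - 1) * bigJ_var c x" unfolding bigJ_var_def using c
    by (simp add: field_simps)
  let ?z = "bigJ_var c x"
  have "poly (bigJ_prod_even n m a b c) ?z + x * poly (bigJ_prod_odd n m a b c) ?z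
      = poly (bigJ_even n a b c) ?z * poly (bigJ_even m a b c) ?z + (1 + (c^2 - 1) * ?z)
          * poly (bigJ_odd n a b c) ?z * poly (bigJ_odd m a b c) ?z
        + x * (poly (bigJ_even n a b c) ?z * poly (bigJ_odd m a b c) ?z + poly (bigJ_odd n a b c) ?z
            * poly (bigJ_even m a b c) ?z)"
    unfolding bigJ_prod_even_def bigJ_prod_odd_def by (simp add: algebra_simps)
  also have "\<dots>
      = (poly (bigJ_even n a b c) ?z + x * poly (bigJ_odd n a b c) ?z)
          * (poly (bigJ_even m a b c) ?z + x * poly (bigJ_odd m a b c) ?z)"
    unfolding x2[symmetric] by (simp add: algebra_simps power2_eq_square)
  finally show ?thesis unfolding bigJ_eq_even_odd[OF a c1] by simp
qed

lemma beta_moment_bigJ_prod_decomp: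
  assumes a: "a > -1" and b: "b > -1" and c: "c^2 > 1"
  defines "g \<equiv> (a + 1) / 2" and "s \<equiv> (b + 1) / 2"
  shows "beta_moment g s (bigJ_prod_fold n m a b c)
       = beta_moment g s (bigJ_even m a b c * jacobi_poly ((n + 1) div 2) g s)
         + beta_moment g (s + 1) (bigJ_odd m a b c * jacobi_poly (n div 2) g (s + 1))
         - c * bigJ_kappa n a b
             * beta_moment (g + 1) s (bigJ_odd m a b c * jacobi_poly (n div 2) (g + 1) s)"
proof -
  have gp: "g > 0" and sp: "s > 0" unfolding g_def s_def using a b by auto
  have c1: "c \<noteq> -1" using c by auto
  let ?L1 = "[:1, -(c + 1):] :: real poly"
  let ?X = "[:1, c^2 - 1:] :: real poly"
  have split: "bigJ_prod_even n m a b c + ?L1 * bigJ_prod_odd n m a b c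
     = bigJ_even m a b c * (bigJ_even n a b c + ?L1 * bigJ_odd n a b c) + bigJ_odd m a b c
         * (?X * bigJ_odd n a b c + ?L1 * bigJ_even n a b c)"
    unfolding bigJ_prod_even_def bigJ_prod_odd_def by (simp add: algebra_simps)
  have r1: "bigJ_even n a b c + ?L1 * bigJ_odd n a b c = jacobi_poly ((n + 1) div 2) g s"
  proof -
    have "bigJ_P n a b + bigJ_Q n a b c + ?L1 * (- bigJ_Q n a b c)
        = bigJ_P n a b + [:0, 1 + c:] * bigJ_Q n a b c"
      by (rule poly_eq_poly_eq_iff[THEN iffD1]) (simp add: fun_eq_iff algebra_simps)
    then show ?thesis unfolding bigJ_even_def bigJ_odd_def bigJ_P_plus_var_Q[OF a c1] g_def s_def .
  qed
  have bigJ_P_eq: "bigJ_P n a b = jacobi_poly (n div 2) g (s + 1)"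
    unfolding bigJ_P_def bigJ_param_def g_def s_def by (simp add: algebra_simps)
  have r2: "?X * bigJ_odd n a b c + ?L1 * bigJ_even n a b c
      = [:1, -1:] * bigJ_P n a b
          - smult c ([:0, 1:] * smult (bigJ_kappa n a b) (jacobi_poly (n div 2) (g + 1) s))"
  proof -
    have "?X * (- bigJ_Q n a b c) + ?L1 * (bigJ_P n a b + bigJ_Q n a b c)
        = [:1, -1:] * bigJ_P n a b
            - smult c ([:0, 1:] * (bigJ_P n a b + smult (1 + c) (bigJ_Q n a b c)))"
      by (rule poly_eq_poly_eq_iff[THEN iffD1])
         (simp add: fun_eq_iff algebra_simps power2_eq_square)
    then show ?thesis unfolding bigJ_even_def bigJ_odd_def bigJ_P_plus_Q[OF a c1] g_def s_def .
  qed
  have "beta_moment g s (bigJ_prod_even n m a b c + ?L1 * bigJ_prod_odd n m a b c)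
      = beta_moment g s (bigJ_even m a b c * jacobi_poly ((n + 1) div 2) g s)
        + (beta_moment g s ([:1, -1:] * (bigJ_odd m a b c * bigJ_P n a b))
           - c * bigJ_kappa n a b
               * beta_moment g s ([:0, 1:] * (bigJ_odd m a b c * jacobi_poly (n div 2) (g + 1) s)))"
    unfolding split r1 r2
    by (simp add: beta_moment_add beta_moment_diff beta_moment_smult beta_moment_pCons_0
        algebra_simps mult_smult_right)
  also have "\<dots> = beta_moment g s (bigJ_even m a b c * jacobi_poly ((n + 1) div 2) g s)
         + beta_moment g (s + 1) (bigJ_odd m a b c * jacobi_poly (n div 2) g (s + 1))
         - c * bigJ_kappa n a b
             * beta_moment (g + 1) s (bigJ_odd m a b c * jacobi_poly (n div 2) (g + 1) s)"
    unfolding beta_moment_one_minus_x[OF gp sp] bigJ_P_eq by (simp add: beta_moment_pCons_0)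
  finally show ?thesis .
qed

lemma beta_moment_bigJ_prod_orthogonal_less:
  assumes a: "a > -1" and b: "b > -1" and c: "c^2 > 1" and mn: "m < n"
  shows "beta_moment ((a + 1) / 2) ((b + 1) / 2) (bigJ_prod_fold n m a b c) = 0"
proof -
  define g where "g = (a + 1) / 2"
  define s where "s = (b + 1) / 2"
  have gp: "g > 0" and sp: "s > 0" unfolding g_def s_def using a b by auto
  have t1: "beta_moment g s (bigJ_even m a b c * jacobi_poly ((n + 1) div 2) g s) = 0"
  proof (rule beta_moment_jacobi_poly_orthogonal[OF gp sp])
    have "degree (bigJ_even m a b c) \<le> m div 2" by (rule degree_bigJ_even)
    moreover have "m div 2 < (n + 1) div 2" using mn by presburger
    ultimately show "degree (bigJ_even m a b c) < (n + 1) div 2 \<or> bigJ_even m a b c = 0" by simp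
  qed
  have dO: "degree (bigJ_odd m a b c) < n div 2 \<or> bigJ_odd m a b c = 0"
  proof (cases "m = 0")
    case True then show ?thesis by (simp add: bigJ_odd_0)
  next
    case False
    have "degree (bigJ_odd m a b c) \<le> (m - 1) div 2" by (rule degree_bigJ_odd)
    moreover have "(m - 1) div 2 < n div 2" using mn False by presburger
    ultimately show ?thesis by simp
  qed
  have t2: "beta_moment g (s + 1) (bigJ_odd m a b c * jacobi_poly (n div 2) g (s + 1)) = 0"
    by (rule beta_moment_jacobi_poly_orthogonal) (use gp sp dO in auto)
  have t3: "beta_moment (g + 1) s (bigJ_odd m a b c * jacobi_poly (n div 2) (g + 1) s) = 0"
    by (rule beta_moment_jacobi_poly_orthogonal) (use gp sp dO in auto)
  show ?thesis using beta_moment_bigJ_prod_decomp[OF a b c, of n m] t1 t2 t3 unfolding g_def s_def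
    by simp
qed

lemma bigJ_prod_even_commute: "bigJ_prod_even n m a b c = bigJ_prod_even m n a b c"
  unfolding bigJ_prod_even_def by (simp add: algebra_simps)

lemma bigJ_prod_odd_commute: "bigJ_prod_odd n m a b c = bigJ_prod_odd m n a b c"
  unfolding bigJ_prod_odd_def by (simp add: algebra_simps)

lemma beta_moment_bigJ_prod_orthogonal:
  assumes a: "a > -1" and b: "b > -1" and c: "c^2 > 1" and mn: "m \<noteq> n"
  shows "beta_moment ((a + 1) / 2) ((b + 1) / 2) (bigJ_prod_fold n m a b c) = 0"
proof (cases "m < n")
  case True then show ?thesis by (rule beta_moment_bigJ_prod_orthogonal_less[OF a b c])
next
  case False
  then have "n < m" using mn by simp
  from beta_moment_bigJ_prod_orthogonal_less[OF a b c this] show ?thesis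
    by (simp add: bigJ_prod_even_commute bigJ_prod_odd_commute)
qed

lemma beta_moment_bigJ_prod_even:
  assumes a: "a > -1" and b: "b > -1" and c: "c^2 > 1" and n: "n = 2 * N"
  shows "beta_moment ((a + 1) / 2) ((b + 1) / 2) (bigJ_prod_fold n n a b c)
       = hyp_coeff N (bigJ_param n a b) ((a + 1) / 2) N * beta_norm ((a + 1) / 2) ((b + 1) / 2) N"
proof -
  define g where "g = (a + 1) / 2"
  define s where "s = (b + 1) / 2"
  have gp: "g > 0" and sp: "s > 0" unfolding g_def s_def using a b by auto
  have d: "(n + 1) div 2 = N" "n div 2 = N" unfolding n by auto
  have cE: "coeff (bigJ_even n a b c) N = hyp_coeff N (bigJ_param n a b) g N"
  proof -
    have "coeff (bigJ_Q n a b c) N = 0"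
    proof (cases "N = 0")
      case True then show ?thesis using n by (simp add: bigJ_Q_0)
    next
      case False
      have "degree (bigJ_Q n a b c) \<le> (n - 1) div 2" by (rule degree_bigJ_Q)
      moreover have "(n - 1) div 2 < N" using n False by presburger
      ultimately show ?thesis by (simp add: coeff_eq_0)
    qed
    then show ?thesis unfolding bigJ_even_def bigJ_P_def d g_def by (simp add: coeff_hyp_poly)
  qed
  have t1: "beta_moment g s (bigJ_even n a b c * jacobi_poly N g s)
      = hyp_coeff N (bigJ_param n a b) g N * beta_norm g s N"
    using beta_moment_jacobi_poly_leading[OF gp sp, of "bigJ_even n a b c" N]
      degree_bigJ_even[of n a b c] unfolding cE d by simp
  have dO: "degree (bigJ_odd n a b c) < N \<or> bigJ_odd n a b c = 0"
  proof (cases "n = 0")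
    case True then show ?thesis by (simp add: bigJ_odd_0)
  next
    case False
    have "degree (bigJ_odd n a b c) \<le> (n - 1) div 2" by (rule degree_bigJ_odd)
    moreover have "(n - 1) div 2 < N" using n False by presburger
    ultimately show ?thesis by simp
  qed
  have t2: "beta_moment g (s + 1) (bigJ_odd n a b c * jacobi_poly N g (s + 1)) = 0"
    by (rule beta_moment_jacobi_poly_orthogonal) (use gp sp dO in auto)
  have t3: "beta_moment (g + 1) s (bigJ_odd n a b c * jacobi_poly N (g + 1) s) = 0"
    by (rule beta_moment_jacobi_poly_orthogonal) (use gp sp dO in auto)
  show ?thesis using beta_moment_bigJ_prod_decomp[OF a b c, of n n] t1 t2 t3 unfolding g_def s_def d
    by simp
qed

lemma beta_moment_bigJ_prod_odd:
  assumes a: "a > -1" and b: "b > -1" and c: "c^2 > 1" and n: "n = 2 * N + 1"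
  shows "beta_moment ((a + 1) / 2) ((b + 1) / 2) (bigJ_prod_fold n n a b c)
       = coeff (bigJ_odd n a b c) N * (beta_norm ((a + 1) / 2) ((b + 1) / 2 + 1) N
           - c * bigJ_kappa n a b * beta_norm ((a + 1) / 2 + 1) ((b + 1) / 2) N)"
proof -
  define g where "g = (a + 1) / 2"
  define s where "s = (b + 1) / 2"
  have gp: "g > 0" and sp: "s > 0" unfolding g_def s_def using a b by auto
  have d: "(n + 1) div 2 = Suc N" "n div 2 = N" "(n - 1) div 2 = N" unfolding n by auto
  have t1: "beta_moment g s (bigJ_even n a b c * jacobi_poly (Suc N) g s) = 0"
  proof (rule beta_moment_jacobi_poly_orthogonal[OF gp sp])
    show "degree (bigJ_even n a b c) < Suc N \<or> bigJ_even n a b c = 0"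
      using degree_bigJ_even[of n a b c] d by simp
  qed
  have dO: "degree (bigJ_odd n a b c) \<le> N" using degree_bigJ_odd[of n a b c] d by simp
  have t2: "beta_moment g (s + 1) (bigJ_odd n a b c * jacobi_poly N g (s + 1))
      = coeff (bigJ_odd n a b c) N * beta_norm g (s + 1) N"
    by (rule beta_moment_jacobi_poly_leading) (use gp sp dO in auto)
  have t3: "beta_moment (g + 1) s (bigJ_odd n a b c * jacobi_poly N (g + 1) s)
      = coeff (bigJ_odd n a b c) N * beta_norm (g + 1) s N"
    by (rule beta_moment_jacobi_poly_leading) (use gp sp dO in auto)
  show ?thesis using beta_moment_bigJ_prod_decomp[OF a b c, of n n] t1 t2 t3 unfolding g_def s_def d
    by (simp add: algebra_simps)
qed

lemma pochhammer_Gamma_pos: "(x::real) > 0 \<Longrightarrow> pochhammer x N = Gamma (x + real N) / Gamma x"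
  by (rule pochhammer_Gamma) (auto dest: nonpos_Ints_nonpos)

lemma Gamma_plus1_pos: "(x::real) > 0 \<Longrightarrow> Gamma (x + 1) = x * Gamma x"
  by (rule Gamma_plus1) (auto dest: nonpos_Ints_nonpos)

lemma htilde_even_Gamma:
  assumes a: "a > -1" and b: "b > -1" and n: "n = 2 * N"
  defines "g \<equiv> (a + 1) / 2" and "s \<equiv> (b + 1) / 2"
  shows "htilde n a b
       = Gamma g ^ 2 * Gamma (s + real N) * fact N / (Gamma (g + real N) * Gamma (g + real N + s))"
proof -
  have gp: "g > 0" unfolding g_def using a by simp
  define q where "q = g + real N"
  have q: "q > 0" unfolding q_def using gp by simp
  have e1: "(real n + b + 1) / 2 = s + real N" unfolding n s_def by (simp add: field_simps)
  have e2: "(real n + a + 3) / 2 = q + 1" unfolding n g_def q_def by (simp add: field_simps)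
  have e3: "real n + a + 1 = 2 * q" unfolding n g_def q_def by (simp add: field_simps)
  have e4: "(real n + a + b + 2) / 2 = q + s" unfolding n q_def g_def s_def
    by (simp add: field_simps)
  have e5: "n div 2 = N" unfolding n by simp
  have "Gamma q > 0" "Gamma g > 0" using q gp by auto
  moreover have "even n" unfolding n by simp
  ultimately show ?thesis
    unfolding htilde_def q_def[symmetric]
    apply (simp only: e1 e2 e3 e4 e5 g_def[symmetric] if_True)
    unfolding Gamma_plus1_pos[OF q] pochhammer_Gamma_pos[OF gp] q_def[symmetric]
    by (simp add: field_simps power2_eq_square)
qed

lemma htilde_even_eq:
  assumes a: "a > -1" and b: "b > -1" and n: "n = 2 * N"
  shows "hyp_coeff N (bigJ_param n a b) ((a + 1) / 2) N * beta_norm ((a + 1) / 2) ((b + 1) / 2) N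
      = htilde n a b"
proof -
  define g where "g = (a + 1) / 2"
  define s where "s = (b + 1) / 2"
  have gp: "g > 0" and sp: "s > 0" unfolding g_def s_def using a b by auto
  define G1 where "G1 = Gamma (g + real N)"
  define S1 where "S1 = Gamma (s + real N)"
  define Gg where "Gg = Gamma g"
  define Gs where "Gs = Gamma s"
  define T where "T = Gamma (g + real N + s)"
  define P where "P = pochhammer (real N + g + s) N"
  have pos: "G1 > 0" "S1 > 0" "Gg > 0" "Gs > 0" "T > 0" "P > 0"
    unfolding G1_def S1_def Gg_def Gs_def T_def P_def using gp sp by (auto intro!: pochhammer_pos)
  have A: "bigJ_param n a b = real N + g + s" unfolding bigJ_param_def n g_def s_def by simp
  have pg: "pochhammer g N = G1 / Gg" unfolding G1_def Gg_def by (rule pochhammer_Gamma_pos[OF gp])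
  have ps: "pochhammer s N = S1 / Gs" unfolding S1_def Gs_def
    by (simp add: pochhammer_Gamma_pos[OF sp] add.commute)
  have B: "Beta (g + real N) s = G1 * Gs / T" unfolding Beta_def G1_def Gs_def T_def ..
  have sq: "((-1::real)^N) * (-1)^N = 1" by (simp add: power_mult_distrib[symmetric])
  have "hyp_coeff N (bigJ_param n a b) g N * beta_norm g s N = Gg^2 * S1 * fact N / (G1 * T)"
    unfolding hyp_coeff_self beta_norm_def A P_def[symmetric] pg ps B
    using pos sq by (simp add: field_simps power2_eq_square)
  then show ?thesis
    unfolding htilde_even_Gamma[OF a b n] Gg_def S1_def G1_def T_def g_def s_def .
qed

lemma htilde_odd_Gamma:
  assumes a: "a > -1" and b: "b > -1" and n: "n = 2 * N + 1"
  defines "g \<equiv> (a + 1) / 2" and "s \<equiv> (b + 1) / 2"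
  shows "htilde n a b = Gamma g ^ 2 * Gamma (s + real N) * fact N * (s + real N)
                        / ((g + real N) * Gamma (g + real N) * Gamma (g + real N + s))"
proof -
  have gp: "g > 0" and sp: "s > 0" unfolding g_def s_def using a b by auto
  define q where "q = g + real N"
  define r where "r = s + real N"
  define A where "A = q + s"
  have qp: "q > 0" and rp: "r > 0" and Ap: "A > 0" unfolding q_def r_def A_def using gp sp by auto
  have e1: "real n + a + b + 1 = 2 * A" unfolding n A_def q_def g_def s_def
    by (simp add: field_simps)
  have e2: "(real n + b + 2) / 2 = r + 1" unfolding n r_def s_def by (simp add: field_simps)
  have e3: "(real n + a + 2) / 2 = q + 1" unfolding n q_def g_def by (simp add: field_simps)
  have e4: "(real n + a + b + 3) / 2 = A + 1" unfolding n A_def q_def g_def s_def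
    by (simp add: field_simps)
  have e5: "(n - 1) div 2 = N" "(n + 1) div 2 = Suc N" unfolding n by simp_all
  have pgS: "pochhammer g (Suc N) = Gamma q / Gamma g * q"
    unfolding pochhammer_Suc pochhammer_Gamma_pos[OF gp] q_def ..
  have "Gamma q > 0" "Gamma r > 0" "Gamma g > 0" "Gamma A > 0" using gp qp rp Ap by auto
  moreover have "odd n" unfolding n by simp
  ultimately show ?thesis
    unfolding htilde_def q_def[symmetric] r_def[symmetric] A_def[symmetric]
    apply (simp only: e1 e2 e3 e4 e5 g_def[symmetric] if_False)
    unfolding Gamma_plus1_pos[OF rp] Gamma_plus1_pos[OF qp] Gamma_plus1_pos[OF Ap] pgS
    by (simp add: field_simps power2_eq_square)
qed

lemma pochhammer_plus1_Gamma:
  fixes x :: real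
  assumes x: "x > 0"
  shows "pochhammer (x + 1) N = (x + real N) * Gamma (x + real N) / (x * Gamma x)"
proof -
  have "pochhammer (x + 1) N = Gamma (x + real N + 1) / Gamma (x + 1)"
    using x pochhammer_Gamma_pos[of "x + 1" N] by (simp add: add_ac)
  then show ?thesis using x by (simp add: Gamma_plus1_pos)
qed

lemma coeff_bigJ_odd_odd:
  assumes n: "n = 2 * N + 1"
  shows "coeff (bigJ_odd n a b c) N
       = bigJ_param n a b / ((a + 1) / 2 * (1 + c))
         * ((-1)^N * pochhammer (bigJ_param n a b + 1) N / pochhammer ((a + 1) / 2 + 1) N)"
proof -
  have "odd n" "n div 2 = N" unfolding n by simp_all
  then show ?thesis unfolding bigJ_odd_def bigJ_Q_def by (simp add: coeff_hyp_poly hyp_coeff_self)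
qed

lemma htilde_odd_eq:
  assumes a: "a > -1" and b: "b > -1" and c: "c \<noteq> -1" and n: "n = 2 * N + 1"
  shows "coeff (bigJ_odd n a b c) N * (beta_norm ((a + 1) / 2) ((b + 1) / 2 + 1) N
           - c * bigJ_kappa n a b * beta_norm ((a + 1) / 2 + 1) ((b + 1) / 2) N) = htilde n a b"
proof -
  define g where "g = (a + 1) / 2"
  define s where "s = (b + 1) / 2"
  have gp: "g > 0" and sp: "s > 0" unfolding g_def s_def using a b by auto
  define q where "q = g + real N"
  define r where "r = s + real N"
  define A where "A = q + s"
  have qp: "q > 0" and rp: "r > 0" and Ap: "A > 0" unfolding q_def r_def A_def using gp sp by auto
  define G1 where "G1 = Gamma q"
  define S1 where "S1 = Gamma r"
  define Gg where "Gg = Gamma g"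
  define Gs where "Gs = Gamma s"
  define T where "T = Gamma A"
  define P where "P = pochhammer (A + 1) N"
  have pos: "G1 > 0" "S1 > 0" "Gg > 0" "Gs > 0" "T > 0" "P > 0"
    unfolding G1_def S1_def Gg_def Gs_def T_def P_def using gp sp qp rp Ap
    by (auto intro!: pochhammer_pos)
  have Aeq: "bigJ_param n a b = A" unfolding bigJ_param_def n g_def s_def A_def q_def by simp
  have kp: "bigJ_kappa n a b = (g - A) / g"
    unfolding bigJ_kappa_def Aeq g_def[symmetric] unfolding n by simp
  have pg: "pochhammer g N = G1 / Gg" "pochhammer s N = S1 / Gs"
    unfolding G1_def Gg_def q_def S1_def Gs_def r_def using gp sp
    by (simp_all add: pochhammer_Gamma_pos)
  have pg1: "pochhammer (g + 1) N = q * G1 / (g * Gg)" "pochhammer (s + 1) N = r * S1 / (s * Gs)"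
    unfolding G1_def Gg_def q_def S1_def Gs_def r_def using gp sp
    by (simp_all add: pochhammer_plus1_Gamma)
  have "Beta (g + real N) (s + 1) = Gamma q * Gamma (s + 1) / Gamma (A + 1)"
    "Beta (g + 1 + real N) s = Gamma (q + 1) * Gamma s / Gamma (A + 1)"
    unfolding Beta_def q_def A_def by (simp_all add: add_ac)
  then have B: "Beta (g + real N) (s + 1) = G1 * (s * Gs) / (A * T)"
    "Beta (g + 1 + real N) s = q * G1 * Gs / (A * T)"
    unfolding G1_def Gs_def T_def using sp qp Ap by (simp_all add: Gamma_plus1_pos)
  have P: "pochhammer (real N + g + (s + 1)) N = P" "pochhammer (real N + (g + 1) + s) N = P"
    unfolding P_def A_def q_def by (simp_all add: add_ac)
  have sq: "((-1::real)^N) * (-1)^N = 1" by (simp add: power_mult_distrib[symmetric])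
  have gA: "g - A = - r" unfolding A_def q_def r_def by simp
  define k where "k = 1 + c"
  have k0: "k \<noteq> 0" unfolding k_def using c by auto
  have ck: "c = k - 1" unfolding k_def by simp
  have "coeff (bigJ_odd n a b c) N
      * (beta_norm g (s + 1) N - c * bigJ_kappa n a b * beta_norm (g + 1) s N)
      = Gg^2 * S1 * fact N * r / (q * G1 * T)"
    unfolding coeff_bigJ_odd_odd[OF n] Aeq g_def[symmetric] P_def[symmetric] kp beta_norm_def B P
      pg pg1 gA k_def[symmetric]
    unfolding ck
    using pos gp sp qp rp Ap k0 sq by (simp add: field_simps power2_eq_square)
  then show ?thesis
    unfolding htilde_odd_Gamma[OF a b n] Gg_def S1_def G1_def T_def A_def q_def r_def g_def s_def .
qed

lemma beta_moment_bigJ_prod: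
  assumes a: "a > -1" and b: "b > -1" and c: "c^2 > 1"
  shows "beta_moment ((a + 1) / 2) ((b + 1) / 2) (bigJ_prod_fold n m a b c)
       = (if n = m then htilde n a b else 0)"
proof (cases "n = m")
  case False then show ?thesis using beta_moment_bigJ_prod_orthogonal[OF a b c, of m n] by simp
next
  case True
  have c1: "c \<noteq> -1" using c by auto
  show ?thesis
  proof (cases "even n")
    case ev: True
    then obtain N where n: "n = 2 * N" by blast
    show ?thesis using True beta_moment_bigJ_prod_even[OF a b c n] htilde_even_eq[OF a b n] by simp
  next
    case od: False
    then obtain N where n: "n = 2 * N + 1" by (metis oddE)
    show ?thesis using True beta_moment_bigJ_prod_odd[OF a b c n] htilde_odd_eq[OF a b c1 n] by simp
  qed
qed

lemma bigJ_orthogonality: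
  fixes a b c :: real
  assumes a: "a > -1" and b: "b > -1" and c: "c^2 > 1"
  shows "(\<lambda>x. bigJ n x a b c * bigJ m x a b c
      * bigJ_weight a b c x) absolutely_integrable_on bigJ_domain c"
    and "((\<lambda>x. bigJ n x a b c * bigJ m x a b c * bigJ_weight a b c x) has_integral
          (if n = m then sgn c * (c^2 - 1) powr ((a + b + 2) / 2) / (1 + c) * htilde n a b else 0))
          (bigJ_domain c)"
proof -
  have c1: "c^2 - 1 > 0" using c by simp
  have cm: "1 + c \<noteq> 0" using c
    by (metis add.commute add_eq_0_iff one_power2 power2_minus less_irrefl)
  have feq: "(\<lambda>x. bigJ n x a b c * bigJ m x a b c * bigJ_weight a b c x)
      = (\<lambda>x. bigJ_weight a b c x * (poly (bigJ_prod_even n m a b c) (bigJ_var c x)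
                                    + x * poly (bigJ_prod_odd n m a b c) (bigJ_var c x)))"
    by (rule ext, subst bigJ_mult_eq[OF a c], simp add: mult.commute)
  have "continuous_on (bigJ_domain c)
      (\<lambda>x. poly (bigJ_prod_even n m a b c) (bigJ_var c x) + x
          * poly (bigJ_prod_odd n m a b c) (bigJ_var c x))"
    unfolding bigJ_var_def using c1 by (intro continuous_intros) auto
  then show "(\<lambda>x. bigJ n x a b c * bigJ m x a b c
      * bigJ_weight a b c x) absolutely_integrable_on bigJ_domain c"
    unfolding feq by (rule absolutely_integrable_bigJ_weight[OF a b c])
  have "(c^2 - 1) powr ((a + b + 2) / 2) = (c^2 - 1) powr ((a + b) / 2 + 1)"
    by (simp add: field_simps)
  also have "\<dots> = (c^2 - 1) powr ((a + b) / 2) * (c^2 - 1) powr 1"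
    by (rule powr_add)
  also have "\<dots> = (c^2 - 1) powr ((a + b) / 2) * ((c - 1) * (1 + c))"
    using c1 by (simp add: power2_eq_square algebra_simps)
  finally have val: "sgn c * (c^2 - 1) powr ((a + b) / 2) * (c - 1)
      * (if n = m then htilde n a b else 0)
      = (if n = m then sgn c * (c^2 - 1) powr ((a + b + 2) / 2) / (1 + c) * htilde n a b else 0)"
    using cm by simp
  show "((\<lambda>x. bigJ n x a b c * bigJ m x a b c * bigJ_weight a b c x) has_integral
          (if n = m then sgn c * (c^2 - 1) powr ((a + b + 2) / 2) / (1 + c) * htilde n a b else 0))
          (bigJ_domain c)"
    unfolding feq val[symmetric] beta_moment_bigJ_prod[OF a b c, symmetric]
    by (rule has_integral_bigJ_weight[OF a b c])
qed

section \<open>The bivariate polynomials\<close>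

lemma bigJ_domain_eq: "bigJ_domain c = {t. 1 \<le> \<bar>t\<bar> \<and> \<bar>t\<bar> \<le> \<bar>c\<bar>}"
  unfolding bigJ_domain_def by auto

lemma Dx_eq: "Dx \<delta> y = {x. \<bar>y\<bar> \<le> \<bar>x\<bar> \<and> \<bar>x\<bar> \<le> \<bar>\<delta>\<bar>}"
  unfolding Dx_def by auto

lemma Dy_eq: "Dy \<delta> = {y. 1 \<le> \<bar>y\<bar> \<and> \<bar>y\<bar> \<le> \<bar>\<delta>\<bar>}"
  unfolding Dy_def by auto

lemma image_mult_bigJ_domain:
  fixes y \<delta> :: real
  assumes y: "y \<noteq> 0"
  shows "(\<lambda>t. y * t) ` bigJ_domain (\<delta> / y) = Dx \<delta> y"
proof (intro equalityI subsetI)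
  fix x assume "x \<in> (\<lambda>t. y * t) ` bigJ_domain (\<delta> / y)"
  then obtain t where t: "1 \<le> \<bar>t\<bar>" "\<bar>t\<bar> \<le> \<bar>\<delta> / y\<bar>" and x: "x = y * t" unfolding bigJ_domain_eq
    by auto
  have ay: "\<bar>y\<bar> > 0" using y by simp
  have "\<bar>y\<bar> * 1 \<le> \<bar>y\<bar> * \<bar>t\<bar>" using t ay by (intro mult_left_mono) auto
  moreover have "\<bar>y\<bar> * \<bar>t\<bar> \<le> \<bar>y\<bar> * \<bar>\<delta> / y\<bar>" using t ay by (intro mult_left_mono) auto
  ultimately show "x \<in> Dx \<delta> y" unfolding Dx_eq x using y by (simp add: abs_mult abs_divide)
next
  fix x assume "x \<in> Dx \<delta> y"
  then have x: "\<bar>y\<bar> \<le> \<bar>x\<bar>" "\<bar>x\<bar> \<le> \<bar>\<delta>\<bar>" unfolding Dx_eq by auto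
  have ay: "\<bar>y\<bar> > 0" using y by simp
  have "x / y \<in> bigJ_domain (\<delta> / y)" unfolding bigJ_domain_eq using x ay
    by (simp add: abs_divide divide_right_mono le_divide_eq_1)
  moreover have "x = y * (x / y)" using y by simp
  ultimately show "x \<in> (\<lambda>t. y * t) ` bigJ_domain (\<delta> / y)" by blast
qed

lemma weightW_mult:
  fixes y t :: real
  assumes y: "y \<noteq> 0"
  shows "weightW \<alpha> \<beta> \<gamma> \<delta> (y * t) y
       = sgn y * \<bar>y\<bar> powr (\<gamma> + \<beta>) * (1 + y) * (y^2 - 1) powr ((\<alpha> - 1) / 2)
           * bigJ_weight \<gamma> \<beta> (\<delta> / y) t"
proof -
  have e1: "(y * t)^2 / y^2 - 1 = t^2 - 1" using y by (simp add: power_mult_distrib)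
  have e2: "(\<delta>^2 - (y * t)^2) / y^2 = (\<delta> / y)^2 - t^2" using y
    by (simp add: power_mult_distrib field_simps)
  have e3: "(\<delta> - y * t) / y = \<delta> / y - t" using y by (simp add: field_simps)
  have e4: "sgn (\<delta> * (y * t) * y) = sgn y * sgn (\<delta> / y * t)"
    using y by (simp add: sgn_mult sgn_divide)
  show ?thesis unfolding weightW_def bigJ_weight_def e1 e2 e3 e4 using y by (simp add: mult_ac)
qed

lemma integral_Dx_bigJ2_scaled:
  fixes \<alpha> \<beta> \<gamma> \<delta> y :: real and n k m l :: nat
  assumes b: "\<beta> > -1" and g: "\<gamma> > -1" and y: "y \<noteq> 0" and c: "(\<delta> / y)^2 > 1"
  defines "Cy \<equiv> bigJ (n - k) y \<alpha> (2 * real k + \<beta> + \<gamma> + 1) ((-1) ^ k * \<delta>) * rho \<delta> k y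
              * (bigJ (m - l) y \<alpha> (2 * real l + \<beta> + \<gamma> + 1) ((-1) ^ l * \<delta>) * rho \<delta> l y)
              * (sgn y * \<bar>y\<bar> powr (\<gamma> + \<beta>) * (1 + y) * (y^2 - 1) powr ((\<alpha> - 1) / 2))"
  defines "f \<equiv> \<lambda>x. bigJ2 \<alpha> \<beta> \<gamma> \<delta> n k x y * bigJ2 \<alpha> \<beta> \<gamma> \<delta> m l x y * weightW \<alpha> \<beta> \<gamma> \<delta> x y"
  shows "f absolutely_integrable_on Dx \<delta> y"
    and "integral (Dx \<delta> y) f
        = \<bar>y\<bar> * Cy * (if k = l then sgn (\<delta> / y) * ((\<delta> / y)^2 - 1) powr ((\<gamma> + \<beta> + 2) / 2)
                                            / (1 + \<delta> / y) * htilde k \<gamma> \<beta> else 0)"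
proof -
  define cc where "cc = \<delta> / y"
  define F where "F t = bigJ k t \<gamma> \<beta> cc * bigJ l t \<gamma> \<beta> cc * bigJ_weight \<gamma> \<beta> cc t" for t
  define V where "V
      = (if k = l then sgn cc * (cc^2 - 1) powr ((\<gamma> + \<beta> + 2) / 2) / (1 + cc) * htilde k \<gamma> \<beta> else 0)"
  have c': "cc^2 > 1" unfolding cc_def using c .
  have fyt: "\<bar>y\<bar> * f (y * t) = (\<bar>y\<bar> * Cy) * F t" for t
    unfolding f_def F_def Cy_def bigJ2_def weightW_mult[OF y] cc_def using y by (simp add: mult_ac)
  have ai: "(\<lambda>t. \<bar>y\<bar> * f (y * t)) absolutely_integrable_on bigJ_domain cc"
    unfolding fyt F_def using absolutely_integrable_scaleR_left[OF bigJ_orthogonality(1)[OF g b c']]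
    by simp
  have iv: "integral (bigJ_domain cc) (\<lambda>t. \<bar>y\<bar> * f (y * t)) = \<bar>y\<bar> * Cy * V"
    unfolding fyt F_def V_def using integral_unique[OF bigJ_orthogonality(2)[OF g b c']] by simp
  have der: "((\<lambda>t. y * t) has_field_derivative y) (at t within bigJ_domain cc)" for t
    by (auto intro!: derivative_eq_intros)
  have inj: "inj_on (\<lambda>t. y * t) (bigJ_domain cc)" using y by (auto intro: inj_onI)
  have meas: "bigJ_domain cc \<in> sets lebesgue" unfolding bigJ_domain_def by simp
  have "f absolutely_integrable_on (\<lambda>t. y * t) ` bigJ_domain cc
      \<and> integral ((\<lambda>t. y * t) ` bigJ_domain cc) f = \<bar>y\<bar> * Cy * V"
    using has_absolute_integral_change_of_variables_1'[OF meas der inj, of f "\<bar>y\<bar> * Cy * V"] ai iv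
    by simp
  then show "f absolutely_integrable_on Dx \<delta> y"
    and "integral (Dx \<delta> y) f
        = \<bar>y\<bar> * Cy * (if k = l then sgn (\<delta> / y) * ((\<delta> / y)^2 - 1) powr ((\<gamma> + \<beta> + 2) / 2)
                                            / (1 + \<delta> / y) * htilde k \<gamma> \<beta> else 0)"
    unfolding cc_def image_mult_bigJ_domain[OF y] V_def by auto
qed

lemma rho_mult_self:
  fixes y \<delta> :: real
  assumes y: "y \<noteq> 0"
  shows "rho \<delta> k y * rho \<delta> k y
      = (if even k then (\<delta>^2 - y^2) ^ k else (\<delta>^2 - y^2) ^ (k - 1) * (y + \<delta>)^2)"
proof (cases "even k")
  case True
  then obtain j where k: "k = 2 * j" by blast
  have "rho \<delta> k y * rho \<delta> k y = (y^2 * (1 - \<delta>^2 / y^2)) ^ (2 * j)"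
    unfolding rho_def k
    by (simp add: power_mult_distrib power_mult[symmetric] power2_eq_square mult_ac
        power_add[symmetric] mult_2_right)
  also have "y^2 * (1 - \<delta>^2 / y^2) = - (\<delta>^2 - y^2)" using y by (simp add: field_simps)
  also have "(- (\<delta>^2 - y^2)) ^ (2 * j) = (\<delta>^2 - y^2) ^ (2 * j)"
    by (simp add: power_mult power2_commute)
  finally show ?thesis using True k by simp
next
  case False
  then obtain j where k: "k = 2 * j + 1" by (metis oddE)
  have "rho \<delta> k y * rho \<delta> k y = (y^2 * (1 - \<delta>^2 / y^2)) ^ (2 * j) * (y * (1 + \<delta> / y))^2"
    unfolding rho_def k
    by (simp add: power_mult_distrib power_mult[symmetric] power2_eq_square mult_ac
        power_add[symmetric] mult_2_right)
  also have "y^2 * (1 - \<delta>^2 / y^2) = - (\<delta>^2 - y^2)" using y by (simp add: field_simps)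
  also have "(- (\<delta>^2 - y^2)) ^ (2 * j) = (\<delta>^2 - y^2) ^ (2 * j)"
    by (simp add: power_mult power2_commute)
  also have "y * (1 + \<delta> / y) = y + \<delta>" using y by (simp add: field_simps)
  finally show ?thesis using False k by simp
qed

lemma powr_quotient_square_minus_one:
  fixes y \<delta> e :: real
  assumes y: "y \<noteq> 0" and D: "\<delta>^2 - y^2 > 0"
  shows "((\<delta> / y)^2 - 1) powr ((e + 2) / 2)
      = (\<delta>^2 - y^2) powr (e / 2) * (\<delta>^2 - y^2) / (\<bar>y\<bar> powr e * y^2)"
proof -
  have "(\<delta> / y)^2 - 1 = (\<delta>^2 - y^2) / \<bar>y\<bar> powr 2"
    using y by (simp add: powr_realpow[symmetric] field_simps)
  then have "((\<delta> / y)^2 - 1) powr ((e + 2) / 2)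
      = (\<delta>^2 - y^2) powr ((e + 2) / 2) / (\<bar>y\<bar> powr 2) powr ((e + 2) / 2)"
    using D by (simp only: powr_divide[symmetric])
  also have "(\<bar>y\<bar> powr 2) powr ((e + 2) / 2) = \<bar>y\<bar> powr (e + 2)"
    unfolding powr_powr by (rule arg_cong[where f = "\<lambda>t. \<bar>y\<bar> powr t"]) simp
  also have "(\<delta>^2 - y^2) powr ((e + 2) / 2) = (\<delta>^2 - y^2) powr (e / 2) * (\<delta>^2 - y^2)"
    using D by (simp add: add_divide_distrib powr_add)
  also have "\<bar>y\<bar> powr (e + 2) = \<bar>y\<bar> powr e * y^2"
    using y by (simp add: powr_add powr_realpow[symmetric])
  finally show ?thesis .
qed

text \<open>The factor \<open>\<rho>\<^sub>k(y)\<^sup>2\<close>, the \<open>y\<close>-part of the weight and the norm of the inner polynomials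
  \<open>J\<^sub>k(x/y; \<gamma>, \<beta>, \<delta>/y)\<close> combine into the univariate weight for \<open>J\<^sub>n\<^sub>-\<^sub>k(y; \<alpha>, 2k+\<beta>+\<gamma>+1, (-1)\<^sup>k\<delta>)\<close>.\<close>

lemma rho_mult_self_reflection:
  fixes y \<delta> :: real
  assumes y: "y \<noteq> 0" and W: "y + \<delta> \<noteq> 0"
  shows "sgn (\<delta> * y) * (rho \<delta> k y * rho \<delta> k y * (\<delta>^2 - y^2) / (y + \<delta>))
       = sgn ((-1) ^ k * \<delta> * y) * ((-1) ^ k * \<delta> - y) * (\<delta>^2 - y^2) ^ k"
proof (cases "even k")
  case True
  have "rho \<delta> k y * rho \<delta> k y * (\<delta>^2 - y^2) / (y + \<delta>) = (\<delta>^2 - y^2) ^ k * (\<delta>^2 - y^2) / (y + \<delta>)"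
    unfolding rho_mult_self[OF y] using True by simp
  also have "\<dots> = (\<delta>^2 - y^2) ^ k * (\<delta> - y)"
    using W by (simp add: field_simps power2_eq_square)
  finally show ?thesis using True by (simp add: mult_ac)
next
  case False
  then have "rho \<delta> k y * rho \<delta> k y * (\<delta>^2 - y^2) = (\<delta>^2 - y^2) ^ k * (y + \<delta>)^2"
    unfolding rho_mult_self[OF y] by (cases k) (simp_all add: mult_ac)
  then have "rho \<delta> k y * rho \<delta> k y * (\<delta>^2 - y^2) / (y + \<delta>) = (\<delta>^2 - y^2) ^ k * (y + \<delta>)"
    using W by (simp add: power2_eq_square)
  then show ?thesis using False by (simp add: sgn_mult algebra_simps)
qed

lemma rho_weight_eq_bigJ_weight:
  fixes y \<delta> \<alpha> \<beta> \<gamma> :: real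
  assumes y: "y \<noteq> 0" and yd: "\<bar>y\<bar> < \<bar>\<delta>\<bar>"
  shows "\<bar>y\<bar>
      * (rho \<delta> k y * rho \<delta> k y
          * (sgn y * \<bar>y\<bar> powr (\<gamma> + \<beta>) * (1 + y) * (y^2 - 1) powr ((\<alpha> - 1) / 2)))
         * (sgn (\<delta> / y) * ((\<delta> / y)^2 - 1) powr ((\<gamma> + \<beta> + 2) / 2) / (1 + \<delta> / y))
       = bigJ_weight \<alpha> (2 * real k + \<beta> + \<gamma> + 1) ((-1) ^ k * \<delta>) y"
proof -
  define D where "D = \<delta>^2 - y^2"
  have "\<bar>y\<bar>^2 < \<bar>\<delta>\<bar>^2" by (rule power_strict_mono) (use yd in auto)
  then have D: "D > 0" unfolding D_def by simp
  define W where "W = y + \<delta>"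
  have W: "W \<noteq> 0" unfolding W_def using yd by auto
  define R where "R = D powr ((\<gamma> + \<beta>) / 2)"
  define Y where "Y = (y^2 - 1) powr ((\<alpha> - 1) / 2)"
  define S where "S = rho \<delta> k y * rho \<delta> k y"
  have Q: "\<bar>y\<bar> powr (\<gamma> + \<beta>) > 0" using y by simp
  have "\<bar>y\<bar> * (S * (sgn y * \<bar>y\<bar> powr (\<gamma> + \<beta>) * (1 + y) * Y))
         * (sgn (\<delta> / y) * (R * D / (\<bar>y\<bar> powr (\<gamma> + \<beta>) * y^2)) / (W / y))
      = sgn (\<delta> * y) * (1 + y) * (Y * R) * (S * D / W)"
  proof (cases "y > 0")
    case True
    then show ?thesis using Q W by (simp add: sgn_mult field_simps power2_eq_square)
  next
    case False
    then have "y < 0" using y by simp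
    then show ?thesis using Q W by (simp add: sgn_mult field_simps power2_eq_square)
  qed
  moreover have "1 + \<delta> / y = W / y" unfolding W_def using y by (simp add: field_simps)
  moreover have "((\<delta> / y)^2 - 1) powr ((\<gamma> + \<beta> + 2) / 2) = R * D / (\<bar>y\<bar> powr (\<gamma> + \<beta>) * y^2)"
    unfolding R_def D_def using powr_quotient_square_minus_one[OF y, of \<delta> "\<gamma> + \<beta>"] D
    unfolding D_def by simp
  ultimately have lhs: "\<bar>y\<bar> * (S * (sgn y * \<bar>y\<bar> powr (\<gamma> + \<beta>) * (1 + y) * Y))
         * (sgn (\<delta> / y) * ((\<delta> / y)^2 - 1) powr ((\<gamma> + \<beta> + 2) / 2) / (1 + \<delta> / y))
      = sgn (\<delta> * y) * (1 + y) * (Y * R) * (S * D / W)"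
    by simp
  have "((-1) ^ k * \<delta>)^2 - y^2 = D"
    unfolding D_def by (simp add: power_mult_distrib power_even_eq[symmetric] power_mult[symmetric])
  moreover have "D powr ((2 * real k + \<beta> + \<gamma> + 1 - 1) / 2) = D ^ k * R"
    unfolding R_def using D by (simp add: add_divide_distrib powr_add powr_realpow add_ac)
  ultimately have rhs: "bigJ_weight \<alpha> (2 * real k + \<beta> + \<gamma> + 1) ((-1) ^ k * \<delta>) y
      = sgn ((-1) ^ k * \<delta> * y) * (1 + y) * ((-1) ^ k * \<delta> - y) * (Y * R) * D ^ k"
    unfolding bigJ_weight_def Y_def by (simp add: mult_ac)
  have "sgn (\<delta> * y) * (S * D / W) = sgn ((-1) ^ k * \<delta> * y) * ((-1) ^ k * \<delta> - y) * D ^ k"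
    unfolding S_def D_def W_def by (rule rho_mult_self_reflection[OF y W[unfolded W_def]])
  then show ?thesis
    unfolding S_def[symmetric] Y_def[symmetric] lhs rhs by (simp only: mult_ac)
qed

lemma Dy_interior:
  assumes "y \<in> Dy \<delta>" and "\<bar>y\<bar> \<noteq> \<bar>\<delta>\<bar>"
  shows "y \<noteq> 0" and "\<bar>y\<bar> < \<bar>\<delta>\<bar>" and "(\<delta> / y)^2 > 1"
proof -
  from assms have y1: "1 \<le> \<bar>y\<bar>" and yd: "\<bar>y\<bar> < \<bar>\<delta>\<bar>" unfolding Dy_eq by auto
  show "y \<noteq> 0" and "\<bar>y\<bar> < \<bar>\<delta>\<bar>" using y1 yd by auto
  have "\<bar>\<delta> / y\<bar> > 1" using y1 yd by (simp add: abs_divide)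
  then have "\<bar>\<delta> / y\<bar>^2 > 1^2" by (rule power_strict_mono) auto
  then show "(\<delta> / y)^2 > 1" by (simp only: power2_abs power_one)
qed

lemma integrable_bigJ2_Dx:
  assumes "\<beta> > -1" and "\<gamma> > -1" and "y \<in> Dy \<delta>"
  shows "(\<lambda>x. bigJ2 \<alpha> \<beta> \<gamma> \<delta> n k x y * bigJ2 \<alpha> \<beta> \<gamma> \<delta> m l x y
      * weightW \<alpha> \<beta> \<gamma> \<delta> x y) integrable_on Dx \<delta> y"
proof (cases "\<bar>y\<bar> = \<bar>\<delta>\<bar>")
  case True
  then have "Dx \<delta> y = {- \<bar>\<delta>\<bar>, \<bar>\<delta>\<bar>}" unfolding Dx_def by auto
  then show ?thesis by (simp add: integrable_negligible)
next
  case False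
  from integral_Dx_bigJ2_scaled(1)[OF assms(1,2) Dy_interior(1,3)[OF assms(3) False]]
  show ?thesis unfolding absolutely_integrable_on_def by blast
qed

lemma integral_bigJ2_Dx:
  fixes \<alpha> \<beta> \<gamma> \<delta> y :: real and n k m l :: nat
  assumes "\<beta> > -1" and "\<gamma> > -1" and "y \<in> Dy \<delta>" and "\<bar>y\<bar> \<noteq> \<bar>\<delta>\<bar>"
  defines "b' \<equiv> 2 * real k + \<beta> + \<gamma> + 1" and "c' \<equiv> (-1) ^ k * \<delta>"
  shows "integral (Dx \<delta> y) (\<lambda>x. bigJ2 \<alpha> \<beta> \<gamma> \<delta> n k x y * bigJ2 \<alpha> \<beta> \<gamma> \<delta> m l x y * weightW \<alpha> \<beta> \<gamma> \<delta> x y)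
       = (if k = l then htilde k \<gamma> \<beta>
           * (bigJ (n - k) y \<alpha> b' c' * bigJ (m - l) y \<alpha> b' c' * bigJ_weight \<alpha> b' c' y)
          else 0)"
proof (cases "k = l")
  case False
  then show ?thesis
    using integral_Dx_bigJ2_scaled(2)[OF assms(1,2) Dy_interior(1,3)[OF assms(3,4)]] by simp
next
  case True
  then have l: "l = k" by simp
  define Wy where "Wy = sgn y * \<bar>y\<bar> powr (\<gamma> + \<beta>) * (1 + y) * (y^2 - 1) powr ((\<alpha> - 1) / 2)"
  define Nk where "Nk = sgn (\<delta> / y) * ((\<delta> / y)^2 - 1) powr ((\<gamma> + \<beta> + 2) / 2) / (1 + \<delta> / y)"
  have weight: "\<bar>y\<bar> * (rho \<delta> k y * rho \<delta> k y * Wy) * Nk = bigJ_weight \<alpha> b' c' y"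
    unfolding Wy_def Nk_def b'_def c'_def
    by (rule rho_weight_eq_bigJ_weight[OF Dy_interior(1,2)[OF assms(3,4)]])
  have "integral (Dx \<delta> y)
        (\<lambda>x. bigJ2 \<alpha> \<beta> \<gamma> \<delta> n k x y * bigJ2 \<alpha> \<beta> \<gamma> \<delta> m l x y * weightW \<alpha> \<beta> \<gamma> \<delta> x y)
      = \<bar>y\<bar> * (bigJ (n - k) y \<alpha> b' c' * rho \<delta> k y * (bigJ (m - k) y \<alpha> b' c' * rho \<delta> k y) * Wy)
        * (Nk * htilde k \<gamma> \<beta>)"
    using integral_Dx_bigJ2_scaled(2)[OF assms(1,2) Dy_interior(1,3)[OF assms(3,4)], of \<alpha> n k m l]
    unfolding l b'_def c'_def Wy_def Nk_def by simp
  also have "\<dots> = htilde k \<gamma> \<beta> * (bigJ (n - k) y \<alpha> b' c' * bigJ (m - k) y \<alpha> b' c'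
      * (\<bar>y\<bar> * (rho \<delta> k y * rho \<delta> k y * Wy) * Nk))"
    by (simp only: mult_ac)
  finally show ?thesis unfolding weight l by simp
qed

lemma has_integral_bigJ_outer:
  fixes \<alpha> \<beta> \<gamma> \<delta> :: real and n k m l :: nat
  assumes "\<alpha> > -1" and "\<beta> > -1" and "\<gamma> > -1" and "\<bar>\<delta>\<bar> > 1" and "k \<le> n" and "l \<le> m"
  defines "b' \<equiv> 2 * real k + \<beta> + \<gamma> + 1" and "c' \<equiv> (-1) ^ k * \<delta>"
  shows "((\<lambda>y. if k = l
                 then htilde k \<gamma> \<beta>
                   * (bigJ (n - k) y \<alpha> b' c' * bigJ (m - l) y \<alpha> b' c' * bigJ_weight \<alpha> b' c' y)
                 else 0) has_integral (if k = l \<and> n = m then Htilde \<alpha> \<beta> \<gamma> \<delta> n k else 0)) (Dy \<delta>)"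
proof (cases "k = l")
  case False
  then show ?thesis by simp
next
  case True
  have c'2: "c'^2 = \<delta>^2" unfolding c'_def
    by (simp add: power_mult_distrib power_even_eq[symmetric] power_mult[symmetric])
  have c': "c'^2 > 1" unfolding c'2 using one_less_power[OF assms(4), of 2] by simp
  have b': "b' > -1" unfolding b'_def using assms(2,3) by simp
  have "bigJ_domain c' = Dy \<delta>" unfolding bigJ_domain_def Dy_def c'_def by (simp add: abs_mult)
  then have int: "((\<lambda>y. bigJ (n - k) y \<alpha> b' c' * bigJ (m - l) y \<alpha> b' c' * bigJ_weight \<alpha> b' c' y)
      has_integral (if n - k = m - l
                    then sgn c' * (c'^2 - 1) powr ((\<alpha> + b' + 2) / 2) / (1 + c') * htilde (n - k) \<alpha> b'
                    else 0)) (Dy \<delta>)"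
    using bigJ_orthogonality(2)[OF assms(1) b' c', of "n - k" "m - l"] by simp
  have "(n - k = m - l) = (n = m)" using assms(5,6) True by auto
  moreover have "sgn c' = (-1) ^ k * sgn \<delta>" unfolding c'_def
    by (cases "even k") (simp_all add: sgn_mult)
  ultimately have "htilde k \<gamma> \<beta>
      * (if n - k = m - l then sgn c' * (c'^2 - 1) powr ((\<alpha> + b' + 2) / 2) / (1 + c')
          * htilde (n - k) \<alpha> b' else 0)
      = (if k = l \<and> n = m then Htilde \<alpha> \<beta> \<gamma> \<delta> n k else 0)"
    using True unfolding c'2 unfolding Htilde_def b'_def c'_def by (simp add: mult_ac add_ac)
  then show ?thesis
    using has_integral_mult_right[OF int, of "htilde k \<gamma> \<beta>"] True by simp
qed

theorem proposition2p2:
  fixes \<alpha> \<beta> \<gamma> \<delta> :: real and n k m l :: nat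
  assumes "\<alpha> > -1" and "\<beta> > -1" and "\<gamma> > -1" and "\<bar>\<delta>\<bar> > 1"
    and "k \<le> n" and "l \<le> m"
  shows "(\<forall>y \<in> Dy \<delta>. (\<lambda>x. bigJ2 \<alpha> \<beta> \<gamma> \<delta> n k x y * bigJ2 \<alpha> \<beta> \<gamma> \<delta> m l x y
                           * weightW \<alpha> \<beta> \<gamma> \<delta> x y) integrable_on Dx \<delta> y)
     \<and> ((\<lambda>y. integral (Dx \<delta> y) (\<lambda>x. bigJ2 \<alpha> \<beta> \<gamma> \<delta> n k x y * bigJ2 \<alpha> \<beta> \<gamma> \<delta> m l x y
                                         * weightW \<alpha> \<beta> \<gamma> \<delta> x y))
         has_integral (if k = l \<and> n = m then Htilde \<alpha> \<beta> \<gamma> \<delta> n k else 0)) (Dy \<delta>)"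
proof
  show "\<forall>y \<in> Dy \<delta>. (\<lambda>x. bigJ2 \<alpha> \<beta> \<gamma> \<delta> n k x y * bigJ2 \<alpha> \<beta> \<gamma> \<delta> m l x y
                     * weightW \<alpha> \<beta> \<gamma> \<delta> x y) integrable_on Dx \<delta> y"
    using integrable_bigJ2_Dx[OF assms(2,3)] by blast
  \<comment> \<open>\<open>integral_bigJ2_Dx\<close> applies except at the endpoints \<open>y = \<plusminus>\<bar>\<delta>\<bar>\<close>, where \<open>Dx \<delta> y\<close> degenerates.\<close>
  show "((\<lambda>y. integral (Dx \<delta> y) (\<lambda>x. bigJ2 \<alpha> \<beta> \<gamma> \<delta> n k x y * bigJ2 \<alpha> \<beta> \<gamma> \<delta> m l x y
                                    * weightW \<alpha> \<beta> \<gamma> \<delta> x y))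
         has_integral (if k = l \<and> n = m then Htilde \<alpha> \<beta> \<gamma> \<delta> n k else 0)) (Dy \<delta>)"
    by (rule has_integral_spike_finite[OF _ _ has_integral_bigJ_outer[OF assms], of "{- \<bar>\<delta>\<bar>, \<bar>\<delta>\<bar>}"])
       (auto simp: integral_bigJ2_Dx[OF assms(2,3)] abs_if split: if_splits)
qed

end
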